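(* Let $K\subset\mathbb{R}^n$ be a closed set whose complement $K^c$ is a bounded open set, and let $\alpha\ge0$, $\lambda>0$, $\mu\in(0,1]$ and $\alpha'$ with $0<\alpha'\le\alpha$ such that $r_\mu^{\alpha'}(K)>\alpha+\lambda$. Let $R_{\max}=R_{\max}(K)$ and $\tilde\mu=\tilde\mu_{\mu,\lambda}^{\alpha,\alpha'}(K)>0$. Then $$\Phi_K\Big(\frac{R_{\max}}{\tilde\mu^2},(K^{\oplus\alpha'})^c\Big)\subset\mathrm{ax}_\lambda^\alpha(K).$$
   Context: For a closed set $K\subset\mathbb{R}^n$ with bounded open complement: $R_K(x)=d(x,K)$; $\Theta_K(x)=\{y\in K:\|x-y\|=R_K(x)\}$; for bounded $S$, $\mathrm{center}(S)$ and $\mathrm{radius}(S)$ are the center and radius of the smallest ball enclosing $S$; $\mathcal F_K(x)=\mathrm{radius}(\Theta_K(x))$; for $x\notin K$, $\nabla_K(x)=(x-\mathrm{center}(\Theta_K(x)))/R_K(x)$. $\Phi_K:[0,\infty)\times K^c\to K^c$ is the flow of $\nabla_K$: the continuous (locally Lipschitz) semiflow with $\Phi_K(0,x)=x$, $\Phi_K(t_1,\Phi_K(t_2,x))=\Phi_K(t_1+t_2,x)$ and right derivative $\frac{d}{dt^+}\Phi_K(t,x)=\nabla_K(\Phi_K(t,x))$. $R_{\max}(K)=\max_{x\in K^c}R_K(x)$. Critical function: $\chi_K(t)=\inf\{\|\nabla_K(x)\|:R_K(x)=t\}$ for $t\in(0,R_{\max}(K)]$ (infimum of empty set $=1$). $K^{\oplus\alpha}=\{x:d(x,K)\le\alpha\}$.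 For $\mu\in(0,1]$, $\alpha\ge0$: $r_\mu^\alpha(K)=\inf\{t>\alpha:\chi_K(t)<\mu\}$. $\mathrm{ax}_\lambda^\alpha(K)=\{x:\mathcal F_{K^{\oplus\alpha}}(x)\ge\lambda\}$. $\tilde\mu_{\mu,\lambda}^{\alpha,\alpha'}(K)=\min\big(\mu,\sqrt{1-(\lambda/(r_\mu^{\alpha'}(K)-\alpha))^2}\big)$. *)

theory Defs
  imports "HOL-Analysis.Analysis"
begin

definition mradius :: "'a::euclidean_space set \<Rightarrow> real" where
  "mradius S = Inf {r. \<exists>c. S \<subseteq> cball c r}"

definition mcenter :: "'a::euclidean_space set \<Rightarrow> 'a" where
  "mcenter S = (THE c. S \<subseteq> cball c (mradius S))"

definition RK :: "'a::euclidean_space set \<Rightarrow> 'a \<Rightarrow> real" where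
  "RK K x = infdist x K"

definition ThetaK :: "'a::euclidean_space set \<Rightarrow> 'a \<Rightarrow> 'a set" where
  "ThetaK K x = {y \<in> K. dist x y = RK K x}"

definition FK :: "'a::euclidean_space set \<Rightarrow> 'a \<Rightarrow> real" where
  "FK K x = mradius (ThetaK K x)"

definition gradK :: "'a::euclidean_space set \<Rightarrow> 'a \<Rightarrow> 'a" where
  "gradK K x = (1 / RK K x) *\<^sub>R (x - mcenter (ThetaK K x))"

definition is_flowK :: "'a::euclidean_space set \<Rightarrow> (real \<Rightarrow> 'a \<Rightarrow> 'a) \<Rightarrow> bool" where
  "is_flowK K \<Phi> \<longleftrightarrow>
     continuous_on ({0..} \<times> (- K)) (\<lambda>(t, x). \<Phi> t x) \<and>
     (\<forall>t\<ge>0. \<forall>x\<in>-K. \<Phi> t x \<in> - K) \<and>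
     (\<forall>x\<in>-K. \<Phi> 0 x = x) \<and>
     (\<forall>t1\<ge>0. \<forall>t2\<ge>0. \<forall>x\<in>-K. \<Phi> t1 (\<Phi> t2 x) = \<Phi> (t1 + t2) x) \<and>
     (\<forall>t\<ge>0. \<forall>x\<in>-K. ((\<lambda>s. \<Phi> s x) has_vector_derivative gradK K (\<Phi> t x)) (at t within {t..}))"

definition Rmax :: "'a::euclidean_space set \<Rightarrow> real" where
  "Rmax K = Sup (RK K ` (- K))"

definition chiK :: "'a::euclidean_space set \<Rightarrow> real \<Rightarrow> real" where
  "chiK K t = (if {x. RK K x = t} = {} then 1 else Inf ((\<lambda>x. norm (gradK K x)) ` {x. RK K x = t}))"

definition offset :: "'a::euclidean_space set \<Rightarrow> real \<Rightarrow> 'a set" where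
  "offset K \<alpha> = {x. infdist x K \<le> \<alpha>}"

text \<open>Infimum in the extended reals, so that \<open>inf \<emptyset> = \<infinity>\<close>.\<close>
definition r_mu :: "'a::euclidean_space set \<Rightarrow> real \<Rightarrow> real \<Rightarrow> ereal" where
  "r_mu K \<mu> \<alpha> = Inf (ereal ` {t. t > \<alpha> \<and> t \<le> Rmax K \<and> chiK K t < \<mu>})"

definition axis :: "'a::euclidean_space set \<Rightarrow> real \<Rightarrow> real \<Rightarrow> 'a set" where
  "axis K lam \<alpha> = {x. FK (offset K \<alpha>) x \<ge> lam}"

definition mu_tilde :: "'a::euclidean_space set \<Rightarrow> real \<Rightarrow> real \<Rightarrow> real \<Rightarrow> real \<Rightarrow> real" where
  "mu_tilde K \<mu> lam \<alpha> \<alpha>' =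
     (if r_mu K \<mu> \<alpha>' = \<infinity> then \<mu>
      else min \<mu> (sqrt (1 - (lam / (real_of_ereal (r_mu K \<mu> \<alpha>') - \<alpha>))\<^sup>2)))"

end

theory Submission
  imports Defs
begin

(* Along the flow, R_K grows at rate |grad_K|^2 and never exceeds R_max, so before time
   R_max / mu~^2 the trajectory passes a point p with |grad_K p| < mu~ <= mu.  There R_K p is at
   least r = r_mu^alpha'(K) > alpha + lambda, and F_K^2 = R_K^2 (1 - |grad_K|^2) gives
   F_K p > R_K p * lambda / (r - alpha).

   F_K is nondecreasing along the flow: after the time change ds = dt / R_K the flow follows the
   field x - center (Theta_K x).  Since the center map is monotone, two points of a trajectory
   separate at most like e^s, so its velocity grows at most like e^s, while R_K^2 grows at twice
   the squared velocity; and F_K^2 = R_K^2 - |velocity|^2.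

   Finally, the nearest points of the offset of K by alpha contain the image of Theta_K under the
   homothety of ratio (R_K - alpha) / R_K centred at the point, so F of the offset is at least
   F_K (R_K - alpha) / R_K, which at the final time is at least lambda. *)

lemma norm_add_sq:
  fixes x y :: "'a::real_inner"
  shows "(norm (x + y))\<^sup>2 = (norm x)\<^sup>2 + 2 * inner x y + (norm y)\<^sup>2"
  using dot_norm[of x y] by simp

lemma norm_diff_sq:
  fixes x y :: "'a::real_inner"
  shows "(norm (x - y))\<^sup>2 = (norm x)\<^sup>2 - 2 * inner x y + (norm y)\<^sup>2"
  using dot_norm_neg[of x y] by simp

section \<open>Smallest enclosing balls\<close>

definition max_dist :: "'a::metric_space set \<Rightarrow> 'a \<Rightarrow> real" where
  "max_dist S c = Sup (dist c ` S)"

lemma dist_le_max_dist: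
  assumes "bounded S" "z \<in> S"
  shows "dist c z \<le> max_dist S c"
proof -
  obtain e where "\<And>z. z \<in> S \<Longrightarrow> dist c z \<le> e" using bounded_any_center assms(1) by metis
  then have "bdd_above (dist c ` S)" by (rule bdd_aboveI2)
  then show ?thesis unfolding max_dist_def using assms(2) by (simp add: cSup_upper)
qed

lemma max_dist_le: "S \<noteq> {} \<Longrightarrow> (\<And>z. z \<in> S \<Longrightarrow> dist c z \<le> r) \<Longrightarrow> max_dist S c \<le> r"
  unfolding max_dist_def by (auto intro!: cSup_least)

lemma subset_cball_max_dist: "bounded S \<Longrightarrow> S \<subseteq> cball c (max_dist S c)"
  using dist_le_max_dist by (auto simp: subset_iff)

lemma max_dist_triangle:
  assumes "S \<noteq> {}" "bounded S"
  shows "max_dist S c \<le> max_dist S c' + dist c c'"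
proof (rule max_dist_le[OF assms(1)])
  fix z assume "z \<in> S"
  then show "dist c z \<le> max_dist S c' + dist c c'"
    using dist_triangle[of c z c'] dist_le_max_dist[OF assms(2), of z c'] by (simp add: dist_commute)
qed

lemma continuous_on_max_dist:
  assumes "S \<noteq> {}" "bounded S"
  shows "continuous_on A (max_dist S)"
proof -
  have "1-lipschitz_on A (max_dist S)"
  proof (rule lipschitz_onI)
    fix c c'
    show "dist (max_dist S c) (max_dist S c') \<le> 1 * dist c c'"
      using max_dist_triangle[OF assms, of c c'] max_dist_triangle[OF assms, of c' c]
      by (simp add: dist_real_def dist_commute)
  qed simp
  then show ?thesis by (rule lipschitz_on_continuous_on)
qed

lemma max_dist_attains_min:
  fixes S :: "'a::heine_borel set"
  assumes "S \<noteq> {}" "bounded S"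
  obtains c where "\<And>c'. max_dist S c \<le> max_dist S c'"
proof -
  obtain z where z: "z \<in> S" using assms(1) by blast
  define D where "D = max_dist S z"
  have z_in: "z \<in> cball z D" using dist_le_max_dist[OF assms(2) z, of z] D_def by simp
  then have "cball z D \<noteq> {}" by blast
  from continuous_attains_inf[OF compact_cball this continuous_on_max_dist[OF assms]]
  obtain c where c: "\<forall>c'\<in>cball z D. max_dist S c \<le> max_dist S c'" by blast
  have "max_dist S c \<le> max_dist S c'" for c'
  proof (cases "c' \<in> cball z D")
    case True
    then show ?thesis using c by blast
  next
    case False
    then have "D \<le> max_dist S c'"
      using dist_le_max_dist[OF assms(2) z, of c'] by (simp add: dist_commute)
    moreover have "max_dist S c \<le> D" using c z_in D_def by blast
    ultimately show ?thesis by linarith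
  qed
  then show thesis by (rule that)
qed

lemma mradius_le:
  assumes "S \<noteq> {}" "S \<subseteq> cball c r"
  shows "mradius S \<le> r"
  unfolding mradius_def
proof (rule cInf_lower)
  obtain z where "z \<in> S" using assms(1) by blast
  then show "bdd_below {r. \<exists>c. S \<subseteq> cball c r}"
    by (intro bdd_belowI[of _ 0]) (force intro: order_trans[OF zero_le_dist])
qed (use assms(2) in blast)

lemma mradius_greatest:
  assumes "bounded S" "\<And>c r. S \<subseteq> cball c r \<Longrightarrow> m \<le> r"
  shows "m \<le> mradius S"
  unfolding mradius_def
  using subset_cball_max_dist[OF assms(1)] assms(2) by (intro cInf_greatest) auto

lemma mradius_nonneg: "S \<noteq> {} \<Longrightarrow> bounded S \<Longrightarrow> 0 \<le> mradius S"
  by (rule mradius_greatest) (auto intro: order_trans[OF zero_le_dist])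

lemma mradius_mono:
  assumes "A \<noteq> {}" "A \<subseteq> B" "bounded B"
  shows "mradius A \<le> mradius B"
  using assms by (intro mradius_greatest[OF assms(3)] mradius_le) auto

lemma mradius_eq_max_dist:
  assumes "S \<noteq> {}" "bounded S" "\<And>c'. max_dist S c \<le> max_dist S c'"
  shows "mradius S = max_dist S c"
proof (rule antisym)
  show "mradius S \<le> max_dist S c" by (rule mradius_le[OF assms(1) subset_cball_max_dist[OF assms(2)]])
  show "max_dist S c \<le> mradius S"
  proof (rule mradius_greatest[OF assms(2)])
    fix c' r assume "S \<subseteq> cball c' r"
    then have "max_dist S c' \<le> r" by (intro max_dist_le[OF assms(1)]) auto
    then show "max_dist S c \<le> r" using assms(3)[of c'] by linarith
  qed
qed

lemma enclosing_ball_unique: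
  fixes S :: "'a::euclidean_space set"
  assumes "S \<noteq> {}" "bounded S" "S \<subseteq> cball c1 (mradius S)" "S \<subseteq> cball c2 (mradius S)"
  shows "c1 = c2"
proof (rule ccontr)
  assume "c1 \<noteq> c2"
  define \<rho> where "\<rho> = mradius S"
  define m where "m = (1/2) *\<^sub>R (c1 + c2)"
  have parallelogram: "(norm (z - m))\<^sup>2 = ((norm (z - c1))\<^sup>2 + (norm (z - c2))\<^sup>2) / 2 - (norm (c1 - c2))\<^sup>2 / 4"
    for z
    unfolding m_def
    by (simp add: power2_norm_eq_inner inner_diff_left inner_diff_right inner_add_left
        inner_add_right inner_commute algebra_simps) (simp add: field_simps)
  have "S \<subseteq> cball m (sqrt (\<rho>\<^sup>2 - (norm (c1 - c2))\<^sup>2 / 4))"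
  proof
    fix z assume "z \<in> S"
    then have "norm (z - c1) \<le> \<rho>" "norm (z - c2) \<le> \<rho>"
      using assms(3,4) by (auto simp: \<rho>_def dist_norm norm_minus_commute)
    then have "(norm (z - m))\<^sup>2 \<le> \<rho>\<^sup>2 - (norm (c1 - c2))\<^sup>2 / 4"
      unfolding parallelogram using power_mono[of "norm (z - c1)" \<rho> 2] power_mono[of "norm (z - c2)" \<rho> 2]
      by simp
    then show "z \<in> cball m (sqrt (\<rho>\<^sup>2 - (norm (c1 - c2))\<^sup>2 / 4))"
      by (simp add: dist_norm norm_minus_commute real_le_rsqrt)
  qed
  then have "\<rho> \<le> sqrt (\<rho>\<^sup>2 - (norm (c1 - c2))\<^sup>2 / 4)"
    using mradius_le[OF assms(1)] \<rho>_def by blast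
  moreover have "0 \<le> \<rho>" using mradius_nonneg[OF assms(1,2)] \<rho>_def by simp
  ultimately have "\<rho>\<^sup>2 \<le> \<rho>\<^sup>2 - (norm (c1 - c2))\<^sup>2 / 4"
    by (metis abs_of_nonneg sqrt_ge_absD)
  then have "(norm (c1 - c2))\<^sup>2 \<le> 0" by simp
  then show False using \<open>c1 \<noteq> c2\<close> by simp
qed

lemma subset_cball_mcenter:
  fixes S :: "'a::euclidean_space set"
  assumes "S \<noteq> {}" "bounded S"
  shows "S \<subseteq> cball (mcenter S) (mradius S)"
proof -
  obtain c where c: "\<And>c'. max_dist S c \<le> max_dist S c'" using max_dist_attains_min[OF assms] by blast
  have "S \<subseteq> cball c (mradius S)"
    using subset_cball_max_dist[OF assms(2)] mradius_eq_max_dist[OF assms c] by simp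
  moreover have "mcenter S = c"
    unfolding mcenter_def using calculation enclosing_ball_unique[OF assms] by (intro the_equality)
  ultimately show ?thesis by simp
qed

lemma mradius_homothety:
  fixes S :: "'a::euclidean_space set"
  assumes "0 < s" "S \<noteq> {}" "bounded S"
  shows "mradius ((\<lambda>z. a + s *\<^sub>R (z - a)) ` S) = s * mradius S"
proof -
  define h where "h z = a + s *\<^sub>R (z - a)" for z
  have dist_h: "dist (h x) (h y) = s * dist x y" for x y
    using assms(1) by (simp add: h_def dist_norm algebra_simps flip: scaleR_diff_right)
  have sub: "h ` S \<subseteq> cball (h (mcenter S)) (s * mradius S)"
    using subset_cball_mcenter[OF assms(2,3)] assms(1) by (auto simp: dist_h)
  have ge: "s * mradius S \<le> r" if "h ` S \<subseteq> cball c r" for c r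
  proof -
    have "S \<subseteq> cball (a + (1 / s) *\<^sub>R (c - a)) (r / s)"
    proof
      fix z assume "z \<in> S"
      then have "dist c (h z) \<le> r" using that by auto
      moreover have "dist c (h z) = s * dist (a + (1 / s) *\<^sub>R (c - a)) z"
        using dist_h[of "a + (1 / s) *\<^sub>R (c - a)" z] assms(1) by (simp add: h_def)
      ultimately show "z \<in> cball (a + (1 / s) *\<^sub>R (c - a)) (r / s)"
        using assms(1) by (simp add: field_simps)
    qed
    then have "mradius S \<le> r / s" by (rule mradius_le[OF assms(2)])
    then show ?thesis using assms(1) by (simp add: field_simps)
  qed
  have "mradius (h ` S) = s * mradius S"
    using assms(2) by (intro antisym mradius_le[OF _ sub] mradius_greatest[OF bounded_subset[OF bounded_cball sub] ge]) auto
  then show ?thesis by (simp add: h_def[abs_def])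
qed

lemma mcenter_not_separated:
  fixes S :: "'a::euclidean_space set"
  assumes "S \<noteq> {}" "compact S"
  shows "\<exists>z\<in>S. 0 \<le> inner (z - mcenter S) w"
proof (rule ccontr)
  assume neg: "\<not> ?thesis"
  define c where "c = mcenter S"
  define \<rho> where "\<rho> = mradius S"
  have bS: "bounded S" using assms(2) compact_imp_bounded by blast
  have cont: "continuous_on S (\<lambda>z. inner (z - c) w)" by (intro continuous_intros)
  obtain z1 where z1: "z1 \<in> S" "\<And>z. z \<in> S \<Longrightarrow> inner (z - c) w \<le> inner (z1 - c) w"
    using continuous_attains_sup[OF assms(2,1) cont] by auto
  define \<delta> where "\<delta> = - inner (z1 - c) w"
  have "0 < \<delta>" using neg z1(1) by (auto simp: \<delta>_def c_def)
  then have "w \<noteq> 0" by (auto simp: \<delta>_def)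
  \<comment> \<open>moving the center by \<open>- \<epsilon> w\<close> shrinks the enclosing ball\<close>
  define \<epsilon> where "\<epsilon> = \<delta> / (norm w)\<^sup>2"
  have "0 < \<epsilon>" using \<open>0 < \<delta>\<close> \<open>w \<noteq> 0\<close> by (simp add: \<epsilon>_def)
  have "S \<subseteq> cball (c - \<epsilon> *\<^sub>R w) (sqrt (\<rho>\<^sup>2 - \<delta>\<^sup>2 / (norm w)\<^sup>2))"
  proof
    fix z assume z: "z \<in> S"
    have "norm (z - c) \<le> \<rho>"
      using subset_cball_mcenter[OF assms(1) bS] z by (auto simp: c_def \<rho>_def dist_norm norm_minus_commute)
    then have "(norm (z - c))\<^sup>2 \<le> \<rho>\<^sup>2" by (simp add: power_mono)
    moreover have "\<epsilon> * inner (z - c) w \<le> \<epsilon> * (- \<delta>)"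
      using z1(2)[OF z] \<open>0 < \<epsilon>\<close> by (simp add: \<delta>_def)
    moreover have "(norm (z - (c - \<epsilon> *\<^sub>R w)))\<^sup>2 = (norm (z - c))\<^sup>2 + 2 * (\<epsilon> * inner (z - c) w) + \<epsilon>\<^sup>2 * (norm w)\<^sup>2"
      using norm_add_sq[of "z - c" "\<epsilon> *\<^sub>R w"] by (simp add: algebra_simps power_mult_distrib)
    moreover have "\<epsilon>\<^sup>2 * (norm w)\<^sup>2 = \<epsilon> * \<delta>" "\<epsilon> * \<delta> = \<delta>\<^sup>2 / (norm w)\<^sup>2"
      using \<open>w \<noteq> 0\<close> by (simp_all add: \<epsilon>_def power2_eq_square)
    ultimately have "(norm (z - (c - \<epsilon> *\<^sub>R w)))\<^sup>2 \<le> \<rho>\<^sup>2 - \<delta>\<^sup>2 / (norm w)\<^sup>2" by linarith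
    then show "z \<in> cball (c - \<epsilon> *\<^sub>R w) (sqrt (\<rho>\<^sup>2 - \<delta>\<^sup>2 / (norm w)\<^sup>2))"
      by (simp add: dist_norm norm_minus_commute real_le_rsqrt)
  qed
  then have "\<rho> \<le> sqrt (\<rho>\<^sup>2 - \<delta>\<^sup>2 / (norm w)\<^sup>2)" using mradius_le[OF assms(1)] \<rho>_def by blast
  moreover have "0 \<le> \<rho>" using mradius_nonneg[OF assms(1) bS] \<rho>_def by simp
  ultimately have "\<rho>\<^sup>2 \<le> \<rho>\<^sup>2 - \<delta>\<^sup>2 / (norm w)\<^sup>2" by (metis abs_of_nonneg sqrt_ge_absD)
  moreover have "0 < \<delta>\<^sup>2 / (norm w)\<^sup>2" using \<open>0 < \<delta>\<close> \<open>w \<noteq> 0\<close> by simp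
  ultimately show False by linarith
qed

lemma mcenter_in_convex_hull:
  fixes S :: "'a::euclidean_space set"
  assumes "S \<noteq> {}" "compact S"
  shows "mcenter S \<in> convex hull S"
proof (rule ccontr)
  assume "mcenter S \<notin> convex hull S"
  moreover have "closed (convex hull S)" by (simp add: assms(2) compact_convex_hull compact_imp_closed)
  ultimately obtain a b where ab: "inner a (mcenter S) < b" "\<forall>x\<in>convex hull S. b < inner a x"
    using separating_hyperplane_closed_point[OF convex_convex_hull] by blast
  obtain z where "z \<in> S" "0 \<le> inner (z - mcenter S) (- a)"
    using mcenter_not_separated[OF assms] by blast
  moreover have "b < inner a z" using ab(2) hull_inc[OF \<open>z \<in> S\<close>] by blast
  ultimately show False using ab(1) by (simp add: inner_diff_left inner_diff_right inner_commute)
qed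

lemma inner_le_on_convex_hulls:
  fixes u :: "'a::real_inner"
  assumes "\<And>a b. a \<in> A \<Longrightarrow> b \<in> B \<Longrightarrow> inner b u \<le> inner a u"
    and "a \<in> convex hull A" "b \<in> convex hull B"
  shows "inner b u \<le> inner a u"
proof -
  have le: "convex {x. inner x u \<le> r}" and ge: "convex {x. r \<le> inner x u}" for r
    using convex_halfspace_le[of u r] convex_halfspace_ge[of r u] by (simp_all add: inner_commute)
  have "convex hull A \<subseteq> {x. inner b' u \<le> inner x u}" if "b' \<in> B" for b'
    using assms(1) that by (intro hull_minimal ge) auto
  then have "convex hull B \<subseteq> {y. inner y u \<le> inner a u}"
    using assms(2) by (intro hull_minimal le) auto
  then show ?thesis using assms(3) by auto
qed

lemma sphere_cap_subset_cball:
  fixes x e :: "'a::real_inner"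
  assumes "norm e = 1" "0 \<le> d" "z \<in> sphere x R" "d \<le> inner (z - x) e"
  shows "z \<in> cball (x + d *\<^sub>R e) (sqrt (R\<^sup>2 - d\<^sup>2))"
proof -
  have "(norm (z - (x + d *\<^sub>R e)))\<^sup>2 = (norm (z - x))\<^sup>2 - 2 * d * inner (z - x) e + d\<^sup>2 * (norm e)\<^sup>2"
    using norm_diff_sq[of "z - x" "d *\<^sub>R e"] by (simp add: algebra_simps power_mult_distrib)
  also have "\<dots> \<le> R\<^sup>2 - d\<^sup>2"
    using assms mult_left_mono[OF assms(4), of "2 * d"] by (simp add: dist_norm norm_minus_commute power2_eq_square)
  finally show ?thesis by (simp add: dist_norm norm_minus_commute real_le_rsqrt)
qed

lemma sphere_inter_cball_halfspace:
  fixes x c z :: "'a::real_inner"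
  assumes "z \<in> sphere x R" "z \<in> cball c \<rho>"
  shows "R\<^sup>2 + (norm (x - c))\<^sup>2 - \<rho>\<^sup>2 \<le> 2 * inner (z - x) (c - x)"
proof -
  have "(norm (z - c))\<^sup>2 = R\<^sup>2 - 2 * inner (z - x) (c - x) + (norm (x - c))\<^sup>2"
    using norm_diff_sq[of "z - x" "c - x"] assms(1) by (simp add: dist_norm norm_minus_commute)
  moreover have "(norm (z - c))\<^sup>2 \<le> \<rho>\<^sup>2"
    using assms(2) by (simp add: dist_norm norm_minus_commute power_mono)
  ultimately show ?thesis by linarith
qed

lemma mradius_sq_sphere:
  fixes S :: "'a::euclidean_space set"
  assumes "S \<noteq> {}" "S \<subseteq> sphere x R"
  shows "(mradius S)\<^sup>2 + (norm (x - mcenter S))\<^sup>2 = R\<^sup>2"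
proof -
  define c where "c = mcenter S"
  define \<rho> where "\<rho> = mradius S"
  define n where "n = norm (x - c)"
  have "bounded S" using assms(2) bounded_subset[OF bounded_sphere] by blast
  then have ball: "S \<subseteq> cball c \<rho>" using subset_cball_mcenter[OF assms(1)] by (simp add: c_def \<rho>_def)
  have "S \<subseteq> cball x R" using assms(2) by auto
  then have "\<rho> \<le> R" using mradius_le[OF assms(1)] \<rho>_def by blast
  have "0 \<le> \<rho>" using mradius_nonneg[OF assms(1) \<open>bounded S\<close>] \<rho>_def by simp
  show ?thesis
  proof (cases "n = 0")
    case True
    obtain z where "z \<in> S" using assms(1) by blast
    then have "R \<le> \<rho>" using ball assms(2) True by (force simp: n_def)
    then show ?thesis using \<open>\<rho> \<le> R\<close> True by (simp add: c_def \<rho>_def n_def)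
  next
    case False
    then have "0 < n" by (simp add: n_def)
    define e where "e = (1 / n) *\<^sub>R (c - x)"
    define d where "d = (R\<^sup>2 + n\<^sup>2 - \<rho>\<^sup>2) / (2 * n)"
    have "norm e = 1" using \<open>0 < n\<close> by (simp add: e_def n_def norm_minus_commute)
    have "0 \<le> R\<^sup>2 + n\<^sup>2 - \<rho>\<^sup>2"
      using power_mono[OF \<open>\<rho> \<le> R\<close> \<open>0 \<le> \<rho>\<close>, of 2] zero_le_power2[of n] by linarith
    then have "0 \<le> d" using \<open>0 < n\<close> by (simp add: d_def)
    \<comment> \<open>S lies in the cap of the sphere cut off by the hyperplane at distance d from x towards c\<close>
    have "d \<le> inner (z - x) e" if "z \<in> S" for z
    proof -
      have "R\<^sup>2 + n\<^sup>2 - \<rho>\<^sup>2 \<le> 2 * inner (z - x) (c - x)"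
        using sphere_inter_cball_halfspace[OF subsetD[OF assms(2) that] subsetD[OF ball that]]
        by (simp add: n_def)
      then have "d \<le> 2 * inner (z - x) (c - x) / (2 * n)"
        unfolding d_def using \<open>0 < n\<close> by (intro divide_right_mono) simp_all
      also have "\<dots> = inner (z - x) e" unfolding e_def inner_scaleR_right by simp
      finally show ?thesis .
    qed
    then have "S \<subseteq> cball (x + d *\<^sub>R e) (sqrt (R\<^sup>2 - d\<^sup>2))"
      using sphere_cap_subset_cball[OF \<open>norm e = 1\<close> \<open>0 \<le> d\<close>] assms(2) by blast
    then have "\<rho> \<le> sqrt (R\<^sup>2 - d\<^sup>2)" using mradius_le[OF assms(1)] \<rho>_def by blast
    then have "\<rho>\<^sup>2 \<le> R\<^sup>2 - d\<^sup>2" using \<open>0 \<le> \<rho>\<close> by (metis abs_of_nonneg sqrt_ge_absD)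
    then have "(R\<^sup>2 + n\<^sup>2 - \<rho>\<^sup>2)\<^sup>2 \<le> 4 * n\<^sup>2 * (R\<^sup>2 - \<rho>\<^sup>2)"
      using \<open>0 < n\<close> by (simp add: d_def power_divide field_simps)
    then have "(R\<^sup>2 - \<rho>\<^sup>2 - n\<^sup>2)\<^sup>2 \<le> 0" by (simp add: power2_eq_square algebra_simps)
    then show ?thesis by (simp add: c_def \<rho>_def n_def)
  qed
qed

lemma inner_mcenter_sphere_ge:
  fixes S :: "'a::euclidean_space set"
  assumes "S \<subseteq> sphere x R" "z \<in> S"
  shows "(norm (x - mcenter S))\<^sup>2 \<le> inner (x - mcenter S) (x - z)"
proof -
  define u where "u = x - mcenter S"
  have "S \<noteq> {}" "bounded S" using assms bounded_subset[OF bounded_sphere] by blast+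
  have "norm (z - mcenter S) \<le> mradius S"
    using subset_cball_mcenter[OF \<open>S \<noteq> {}\<close> \<open>bounded S\<close>] assms(2) by (auto simp: dist_norm norm_minus_commute)
  then have "(norm (mcenter S - z))\<^sup>2 \<le> (mradius S)\<^sup>2" by (simp add: power_mono norm_minus_commute)
  moreover have "(mradius S)\<^sup>2 + (norm u)\<^sup>2 = R\<^sup>2" using mradius_sq_sphere[OF \<open>S \<noteq> {}\<close> assms(1)] u_def by simp
  moreover have "norm (x - z) = R" using assms by (auto simp: dist_norm)
  then have "R\<^sup>2 = (norm u)\<^sup>2 + 2 * inner u (mcenter S - z) + (norm (mcenter S - z))\<^sup>2"
    using norm_add_sq[of u "mcenter S - z"] by (simp add: u_def)
  moreover have "inner u (x - z) = (norm u)\<^sup>2 + inner u (mcenter S - z)"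
    by (simp add: u_def inner_diff_right power2_norm_eq_inner)
  ultimately show ?thesis unfolding u_def[symmetric] by linarith
qed

section \<open>Nearest points\<close>

lemma ThetaK_subset_K: "ThetaK K x \<subseteq> K"
  unfolding ThetaK_def by auto

lemma ThetaK_subset_sphere: "ThetaK K x \<subseteq> sphere x (RK K x)"
  unfolding ThetaK_def by auto

lemma dist_ThetaK: "z \<in> ThetaK K x \<Longrightarrow> dist x z = RK K x"
  unfolding ThetaK_def by auto

lemma ThetaK_nonempty:
  assumes "closed K" "K \<noteq> {}"
  shows "ThetaK K x \<noteq> {}"
proof -
  obtain y where "y \<in> K" "infdist x K = dist x y" using infdist_attains_inf[OF assms] by blast
  then show ?thesis unfolding ThetaK_def RK_def by auto
qed

lemma compact_ThetaK: "closed K \<Longrightarrow> compact (ThetaK K x)"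
  using closed_Int_compact[of K "sphere x (RK K x)"] unfolding ThetaK_def by (simp add: Int_def)

lemma RK_pos: "closed K \<Longrightarrow> K \<noteq> {} \<Longrightarrow> x \<notin> K \<Longrightarrow> 0 < RK K x"
  unfolding RK_def by (rule infdist_pos_not_in_closed)

lemma RK_le_dist: "z \<in> K \<Longrightarrow> RK K x \<le> dist x z"
  unfolding RK_def by (rule infdist_le)

lemma RK_triangle: "RK K x \<le> RK K y + dist x y"
  unfolding RK_def by (rule infdist_triangle)

lemma continuous_on_RK: "continuous_on S (RK K)"
  unfolding RK_def by (intro continuous_intros)

lemma FK_sq_add_norm_sq:
  assumes "closed K" "K \<noteq> {}"
  shows "(FK K x)\<^sup>2 + (norm (x - mcenter (ThetaK K x)))\<^sup>2 = (RK K x)\<^sup>2"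
  unfolding FK_def by (rule mradius_sq_sphere[OF ThetaK_nonempty[OF assms] ThetaK_subset_sphere])

lemma FK_nonneg: "closed K \<Longrightarrow> K \<noteq> {} \<Longrightarrow> 0 \<le> FK K x"
  unfolding FK_def
  by (intro mradius_nonneg ThetaK_nonempty compact_imp_bounded compact_ThetaK)

lemma inner_mcenter_ThetaK_ge:
  "z \<in> ThetaK K x \<Longrightarrow>
    (norm (x - mcenter (ThetaK K x)))\<^sup>2 \<le> inner (x - mcenter (ThetaK K x)) (x - z)"
  by (rule inner_mcenter_sphere_ge[OF ThetaK_subset_sphere])

lemma norm_gradK: "norm (gradK K x) = norm (x - mcenter (ThetaK K x)) / RK K x"
  unfolding gradK_def RK_def by (simp add: infdist_nonneg)

lemma nearest_points_monotone:
  assumes "zp \<in> ThetaK K p" "zq \<in> ThetaK K q"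
  shows "0 \<le> inner (zp - zq) (p - q)"
proof -
  have "zp \<in> K" "zq \<in> K" using assms ThetaK_subset_K by blast+
  then have "norm (p - zp) \<le> norm (p - zq)" "norm (q - zq) \<le> norm (q - zp)"
    using assms RK_le_dist dist_ThetaK by (metis dist_norm)+
  then have "(norm (p - zp))\<^sup>2 \<le> (norm (p - zq))\<^sup>2" "(norm (q - zq))\<^sup>2 \<le> (norm (q - zp))\<^sup>2"
    by (simp_all add: power_mono)
  then show ?thesis
    unfolding norm_diff_sq by (simp add: inner_diff_left inner_diff_right inner_commute)
qed

lemma mcenter_ThetaK_monotone:
  assumes "closed K" "K \<noteq> {}"
  shows "0 \<le> inner (mcenter (ThetaK K p) - mcenter (ThetaK K q)) (p - q)"
proof -
  have "inner (mcenter (ThetaK K q)) (p - q) \<le> inner (mcenter (ThetaK K p)) (p - q)"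
  proof (rule inner_le_on_convex_hulls)
    show "inner b (p - q) \<le> inner a (p - q)" if "a \<in> ThetaK K p" "b \<in> ThetaK K q" for a b
      using nearest_points_monotone[OF that] by (simp add: inner_diff_left)
  qed (intro mcenter_in_convex_hull ThetaK_nonempty compact_ThetaK assms)+
  then show ?thesis by (simp add: inner_diff_left)
qed

lemma nonempty_if_bounded_complement:
  fixes K :: "'a::euclidean_space set"
  shows "bounded (- K) \<Longrightarrow> K \<noteq> {}"
  by auto

lemma RK_le_Rmax:
  assumes "bounded (- K)" "K \<noteq> {}" "p \<notin> K"
  shows "RK K p \<le> Rmax K"
proof -
  obtain k where "k \<in> K" using assms(2) by blast
  moreover obtain e where "\<And>q. q \<in> - K \<Longrightarrow> dist k q \<le> e"
    using bounded_any_center assms(1) by metis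
  ultimately have "RK K q \<le> e" if "q \<in> - K" for q
    using RK_le_dist[of k K q] that by (force simp: dist_commute)
  then have "bdd_above (RK K ` (- K))" by (rule bdd_aboveI2)
  then show ?thesis unfolding Rmax_def using assms(3) by (simp add: cSup_upper)
qed

lemma FK_sq_eq:
  assumes "closed K" "K \<noteq> {}" "p \<notin> K"
  shows "(FK K p)\<^sup>2 = (RK K p)\<^sup>2 * (1 - (norm (gradK K p))\<^sup>2)"
proof -
  have "(RK K p)\<^sup>2 * (1 - (norm (gradK K p))\<^sup>2) = (RK K p)\<^sup>2 - (norm (p - mcenter (ThetaK K p)))\<^sup>2"
    using RK_pos[OF assms] by (simp add: norm_gradK power_divide field_simps)
  then show ?thesis using FK_sq_add_norm_sq[OF assms(1,2), of p] by simp
qed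

lemma RK_mult_lt_FK:
  assumes "closed K" "K \<noteq> {}" "p \<notin> K" "0 \<le> \<kappa>"
    and "norm (gradK K p) < sqrt (1 - \<kappa>\<^sup>2)"
  shows "RK K p * \<kappa> < FK K p"
proof -
  have "0 < sqrt (1 - \<kappa>\<^sup>2)" using le_less_trans[OF norm_ge_zero assms(5)] .
  moreover have "(norm (gradK K p))\<^sup>2 < (sqrt (1 - \<kappa>\<^sup>2))\<^sup>2"
    using assms(5) by (intro power_strict_mono) auto
  ultimately have "(norm (gradK K p))\<^sup>2 < 1 - \<kappa>\<^sup>2" by simp
  then have "(RK K p * \<kappa>)\<^sup>2 < (FK K p)\<^sup>2"
    using RK_pos[OF assms(1-3)] unfolding FK_sq_eq[OF assms(1-3)] power_mult_distrib
    by (intro mult_strict_left_mono) auto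
  then show ?thesis using FK_nonneg[OF assms(1,2)] by (rule power2_less_imp_less)
qed

lemma ThetaK_upper_semicontinuous:
  fixes K :: "'a::euclidean_space set" and h :: "'a \<Rightarrow> real"
  assumes "closed K" "continuous_on K h" "\<And>z. z \<in> ThetaK K a \<Longrightarrow> H \<le> h z" "0 < \<epsilon>"
  shows "\<exists>\<rho>>0. \<forall>b z. dist b a < \<rho> \<longrightarrow> z \<in> ThetaK K b \<longrightarrow> H - \<epsilon> < h z"
proof -
  define Ra where "Ra = RK K a"
  define C where "C = {z \<in> K \<inter> cball a (Ra + 1). h z \<le> H - \<epsilon>}"
  have "compact C"
  proof -
    have "continuous_on (K \<inter> cball a (Ra + 1)) h" using assms(2) by (rule continuous_on_subset) auto
    moreover have "closed (K \<inter> cball a (Ra + 1))" using assms(1) by (simp add: closed_Int)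
    ultimately have "closed C"
      unfolding C_def by (rule continuous_on_closed_Collect_le[OF _ continuous_on_const])
    moreover have "bounded C" by (rule bounded_subset[OF bounded_cball]) (auto simp: C_def)
    ultimately show ?thesis by (simp add: compact_eq_bounded_closed)
  qed
  \<comment> \<open>the bad points of K stay a definite amount farther from a than the nearest ones\<close>
  obtain \<gamma> where "0 < \<gamma>" and \<gamma>: "\<And>z. z \<in> C \<Longrightarrow> Ra + \<gamma> \<le> dist a z"
  proof (cases "C = {}")
    case False
    obtain z0 where z0: "z0 \<in> C" "\<And>z. z \<in> C \<Longrightarrow> dist a z0 \<le> dist a z"
      using continuous_attains_inf[OF \<open>compact C\<close> False continuous_on_dist[OF continuous_on_const[of C a] continuous_on_id]]
      by auto
    have "z0 \<in> K" "h z0 < H" using z0(1) assms(4) by (auto simp: C_def)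
    then have "z0 \<notin> ThetaK K a" using assms(3) by force
    then have "Ra < dist a z0" using RK_le_dist[OF \<open>z0 \<in> K\<close>, of a] \<open>z0 \<in> K\<close>
      by (auto simp: ThetaK_def Ra_def)
    then show thesis using z0(2) by (intro that[of "dist a z0 - Ra"]) auto
  qed (use that[of 1] in auto)
  show ?thesis
  proof (intro exI[of _ "min (1/2) (\<gamma>/2)"] conjI allI impI)
    fix b z assume b: "dist b a < min (1/2) (\<gamma>/2)" and z: "z \<in> ThetaK K b"
    have "dist a z \<le> dist a b + RK K b" using dist_triangle[of a z b] dist_ThetaK[OF z] by simp
    also have "\<dots> \<le> Ra + 2 * dist b a" using RK_triangle[of K b a] by (simp add: Ra_def dist_commute)
    finally have "dist a z < Ra + min 1 \<gamma>" using b by linarith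
    moreover have "z \<in> K" using z ThetaK_subset_K by blast
    ultimately show "H - \<epsilon> < h z" using \<gamma>[of z] by (force simp: C_def)
  qed (use \<open>0 < \<gamma>\<close> in auto)
qed

lemma RK_ge_linear_bound:
  assumes "z \<in> ThetaK K b" "a \<noteq> z"
  shows "RK K a + inner (b - a) (a - z) / norm (a - z) \<le> RK K b"
proof -
  have "0 < norm (a - z)" using assms(2) by simp
  have "RK K a \<le> norm (a - z)"
    using RK_le_dist[of z K a] assms(1) ThetaK_subset_K by (auto simp: dist_norm)
  then have "RK K a * norm (a - z) \<le> (norm (a - z))\<^sup>2"
    by (simp add: mult_right_mono power2_eq_square)
  moreover have "inner (b - a) (a - z) + (norm (a - z))\<^sup>2 = inner (b - z) (a - z)"
    by (simp add: power2_norm_eq_inner inner_diff_left)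
  moreover have "inner (b - z) (a - z) \<le> RK K b * norm (a - z)"
    using norm_cauchy_schwarz[of "b - z" "a - z"] dist_ThetaK[OF assms(1)] by (simp add: dist_norm)
  ultimately have "RK K a * norm (a - z) + inner (b - a) (a - z) \<le> RK K b * norm (a - z)"
    by linarith
  then show ?thesis using \<open>0 < norm (a - z)\<close> by (simp add: field_simps)
qed

lemma RK_ge_first_order:
  assumes "z \<in> ThetaK K b" "a \<noteq> z" "norm (b - a - k *\<^sub>R v) \<le> \<eta>"
  shows "RK K a + k * (inner v (a - z) / norm (a - z)) - \<eta> \<le> RK K b"
proof -
  define e where "e = b - a - k *\<^sub>R v"
  have "- (norm e * norm (a - z)) \<le> inner e (a - z)"
    using Cauchy_Schwarz_ineq2[of e "a - z"] by (simp add: abs_le_iff)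
  then have "- norm e \<le> inner e (a - z) / norm (a - z)"
    using assms(2) by (simp add: le_divide_eq)
  moreover have "inner (b - a) (a - z) / norm (a - z)
      = k * (inner v (a - z) / norm (a - z)) + inner e (a - z) / norm (a - z)"
    by (simp add: e_def inner_diff_left add_divide_distrib[symmetric])
  ultimately show ?thesis
    using RK_ge_linear_bound[OF assms(1,2)] assms(3) by (simp add: e_def)
qed

section \<open>Right Dini derivatives\<close>

definition right_dini_ge :: "(real \<Rightarrow> real) \<Rightarrow> real \<Rightarrow> real \<Rightarrow> bool" where
  "right_dini_ge f t m \<longleftrightarrow> (\<forall>\<epsilon>>0. eventually (\<lambda>s. f t + (s - t) * (m - \<epsilon>) \<le> f s) (at_right t))"

lemma right_dini_ge_mono:
  assumes "right_dini_ge f t m" "m' \<le> m"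
  shows "right_dini_ge f t m'"
  unfolding right_dini_ge_def
proof (intro allI impI)
  fix \<epsilon> :: real assume "0 < \<epsilon>"
  with assms(1) have "eventually (\<lambda>s. f t + (s - t) * (m - \<epsilon>) \<le> f s) (at_right t)"
    unfolding right_dini_ge_def by blast
  with eventually_at_right_less[of t]
  show "eventually (\<lambda>s. f t + (s - t) * (m' - \<epsilon>) \<le> f s) (at_right t)"
  proof eventually_elim
    case (elim s)
    with assms(2) have "(s - t) * (m' - \<epsilon>) \<le> (s - t) * (m - \<epsilon>)" by (intro mult_left_mono) auto
    with elim show ?case by linarith
  qed
qed

lemma right_dini_ge_add:
  assumes "right_dini_ge f t m1" "right_dini_ge g t m2"
  shows "right_dini_ge (\<lambda>s. f s + g s) t (m1 + m2)"
  unfolding right_dini_ge_def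
proof (intro allI impI)
  fix \<epsilon> :: real assume "0 < \<epsilon>"
  then have "eventually (\<lambda>s. f t + (s - t) * (m1 - \<epsilon>/2) \<le> f s) (at_right t)"
    and "eventually (\<lambda>s. g t + (s - t) * (m2 - \<epsilon>/2) \<le> g s) (at_right t)"
    using assms unfolding right_dini_ge_def by simp_all
  then show "eventually (\<lambda>s. f t + g t + (s - t) * (m1 + m2 - \<epsilon>) \<le> f s + g s) (at_right t)"
  proof eventually_elim
    case (elim s)
    have "(s - t) * (m1 + m2 - \<epsilon>) = (s - t) * (m1 - \<epsilon>/2) + (s - t) * (m2 - \<epsilon>/2)"
      by (simp add: algebra_simps)
    with elim show ?case by linarith
  qed
qed

lemma has_real_derivative_imp_right_dini_ge:
  assumes "(f has_real_derivative D) (at t within {t..})"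
  shows "right_dini_ge f t D"
  unfolding right_dini_ge_def
proof (intro allI impI)
  fix \<epsilon> :: real assume "0 < \<epsilon>"
  have "((\<lambda>s. (f s - f t) / (s - t)) \<longlongrightarrow> D) (at_right t)"
    using assms unfolding has_field_derivative_iff at_within_Ici_at_right .
  then have "eventually (\<lambda>s. dist ((f s - f t) / (s - t)) D < \<epsilon>) (at_right t)"
    using \<open>0 < \<epsilon>\<close> by (rule tendstoD)
  with eventually_at_right_less[of t]
  show "eventually (\<lambda>s. f t + (s - t) * (D - \<epsilon>) \<le> f s) (at_right t)"
  proof eventually_elim
    case (elim s)
    then have "D - \<epsilon> \<le> (f s - f t) / (s - t)" by (simp add: dist_real_def abs_less_iff)
    with elim show ?case by (simp add: field_simps)
  qed
qed

lemma right_dini_ge_square: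
  assumes "right_dini_ge f t m" "0 \<le> f t"
  shows "right_dini_ge (\<lambda>s. (f s)\<^sup>2) t (2 * f t * m)"
  unfolding right_dini_ge_def
proof (intro allI impI)
  fix \<epsilon> :: real assume "0 < \<epsilon>"
  define \<epsilon>' where "\<epsilon>' = \<epsilon> / (2 * f t + 1)"
  have "0 < \<epsilon>'" "2 * f t * \<epsilon>' \<le> \<epsilon>"
    using \<open>0 < \<epsilon>\<close> assms(2) by (auto simp: \<epsilon>'_def field_simps)
  then have "eventually (\<lambda>s. f t + (s - t) * (m - \<epsilon>') \<le> f s) (at_right t)"
    using assms(1) unfolding right_dini_ge_def by blast
  with eventually_at_right_less[of t]
  show "eventually (\<lambda>s. (f t)\<^sup>2 + (s - t) * (2 * f t * m - \<epsilon>) \<le> (f s)\<^sup>2) (at_right t)"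
  proof eventually_elim
    case (elim s)
    have "(f t)\<^sup>2 + 2 * f t * (f s - f t) \<le> (f s)\<^sup>2"
      using zero_le_power2[of "f s - f t"] by (simp add: power2_eq_square algebra_simps)
    moreover have "2 * f t * ((s - t) * (m - \<epsilon>')) \<le> 2 * f t * (f s - f t)"
      using elim assms(2) by (intro mult_left_mono) auto
    moreover have "(s - t) * (2 * f t * \<epsilon>') \<le> (s - t) * \<epsilon>"
      using elim \<open>2 * f t * \<epsilon>' \<le> \<epsilon>\<close> by (intro mult_left_mono) auto
    ultimately show ?case by (simp add: algebra_simps)
  qed
qed

lemma le_if_locally_right_mono:
  fixes f :: "real \<Rightarrow> real"
  assumes "a \<le> b" "continuous_on {a..b} f"
    and local_mono: "\<And>t. a \<le> t \<Longrightarrow> t < b \<Longrightarrow> eventually (\<lambda>s. f t \<le> f s) (at_right t)"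
  shows "f a \<le> f b"
proof (rule ccontr)
  assume "\<not> f a \<le> f b"
  define N where "N = {t \<in> {a..b}. f t < f a}"
  define s where "s = Inf N"
  have "b \<in> N" using \<open>\<not> f a \<le> f b\<close> assms(1) by (simp add: N_def)
  have "bdd_below N" by (rule bdd_belowI[of _ a]) (simp add: N_def)
  then have s_le: "s \<le> n" if "n \<in> N" for n using that by (simp add: s_def cInf_lower)
  have "a \<le> s" unfolding s_def using \<open>b \<in> N\<close> by (intro cInf_greatest) (auto simp: N_def)
  have "s \<le> b" using s_le[OF \<open>b \<in> N\<close>] .
  \<comment> \<open>f stays above f a on \<open>[a, s)\<close>, hence at s by continuity\<close>
  have "f a \<le> f s"
  proof (cases "a = s")
    case False
    define Z where "Z = {u \<in> {a..b}. f a \<le> f u}"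
    have "closed Z" unfolding Z_def
      by (rule continuous_on_closed_Collect_le[OF continuous_on_const assms(2) closed_atLeastAtMost])
    moreover have "{a..<s} \<subseteq> Z"
      using s_le \<open>s \<le> b\<close> by (force simp: Z_def N_def not_less)
    ultimately have "closure {a..<s} \<subseteq> Z" by (rule closure_minimal[rotated])
    then show ?thesis using False \<open>a \<le> s\<close> by (auto simp: Z_def)
  qed simp
  then have "s \<notin> N" by (simp add: N_def)
  then have "s < b" using \<open>s \<le> b\<close> \<open>b \<in> N\<close> by (cases "s = b") auto
  then have "eventually (\<lambda>u. f s \<le> f u) (at_right s)" using local_mono \<open>a \<le> s\<close> by blast
  then obtain b' where "s < b'" and b': "\<And>u. s < u \<Longrightarrow> u < b' \<Longrightarrow> f s \<le> f u"
    unfolding eventually_at_right_field by blast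
  have "b' \<le> n" if "n \<in> N" for n
  proof (rule ccontr)
    assume "\<not> b' \<le> n"
    moreover have "s < n" using s_le[OF that] \<open>s \<notin> N\<close> that by (cases "s = n") auto
    ultimately have "f s \<le> f n" using b' by simp
    then show False using that \<open>f a \<le> f s\<close> by (simp add: N_def)
  qed
  then have "b' \<le> s" unfolding s_def using \<open>b \<in> N\<close> by (intro cInf_greatest) auto
  then show False using \<open>s < b'\<close> by simp
qed

lemma right_dini_ge_imp_le:
  fixes f :: "real \<Rightarrow> real"
  assumes "a \<le> b" "continuous_on {a..b} f" "\<And>t. a \<le> t \<Longrightarrow> t < b \<Longrightarrow> right_dini_ge f t 0"
  shows "f a \<le> f b"
proof (rule field_le_epsilon)
  fix e :: real assume "0 < e"
  define \<epsilon> where "\<epsilon> = e / (b - a + 1)"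
  have "0 < \<epsilon>" "\<epsilon> * (b - a) \<le> e" using \<open>0 < e\<close> assms(1) by (auto simp: \<epsilon>_def field_simps)
  \<comment> \<open>adding \<open>\<epsilon> s\<close> turns the Dini bound into local monotonicity\<close>
  have "f a + \<epsilon> * a \<le> f b + \<epsilon> * b"
  proof (rule le_if_locally_right_mono[OF assms(1), of "\<lambda>s. f s + \<epsilon> * s"])
    show "continuous_on {a..b} (\<lambda>s. f s + \<epsilon> * s)" by (intro continuous_intros assms(2))
    fix t assume "a \<le> t" "t < b"
    then have "eventually (\<lambda>s. f t + (s - t) * (0 - \<epsilon>) \<le> f s) (at_right t)"
      using assms(3) \<open>0 < \<epsilon>\<close> unfolding right_dini_ge_def by blast
    then show "eventually (\<lambda>s. f t + \<epsilon> * t \<le> f s + \<epsilon> * s) (at_right t)"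
      by eventually_elim (simp add: algebra_simps)
  qed
  then show "f a \<le> f b + e" using \<open>\<epsilon> * (b - a) \<le> e\<close> by (simp add: algebra_simps)
qed

lemma has_vector_derivative_right_approx:
  assumes "(w has_vector_derivative v) (at t within {t..})" "0 < \<eta>"
  shows "eventually (\<lambda>s. norm (w s - w t - (s - t) *\<^sub>R v) \<le> \<eta> * (s - t)) (at_right t)"
proof -
  have "eventually (\<lambda>s. norm (w s - w t - (s - t) *\<^sub>R v) \<le> \<eta> * norm (s - t)) (at_right t)"
    using assms unfolding has_vector_derivative_def has_derivative_within_alt2 at_within_Ici_at_right
    by blast
  with eventually_at_right_less[of t] show ?thesis by eventually_elim simp
qed

lemma norm_difference_quotient_tendsto:
  assumes "(w has_vector_derivative v) (at t within {t..})"
  shows "((\<lambda>h. norm (w (t + h) - w t) / h) \<longlongrightarrow> norm v) (at_right 0)"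
proof (rule tendstoI)
  fix \<eta> :: real assume "0 < \<eta>"
  have "eventually (\<lambda>s. norm (w s - w t - (s - t) *\<^sub>R v) \<le> \<eta>/2 * (s - t)) (at_right t)"
    by (rule has_vector_derivative_right_approx[OF assms]) (use \<open>0 < \<eta>\<close> in simp)
  then have "eventually (\<lambda>h. norm (w (t + h) - w t - h *\<^sub>R v) \<le> \<eta>/2 * h) (at_right 0)"
    unfolding eventually_at_right_to_0[of _ t] by (simp add: add.commute)
  with eventually_at_right_less[of 0]
  show "eventually (\<lambda>h. dist (norm (w (t + h) - w t) / h) (norm v) < \<eta>) (at_right 0)"
  proof eventually_elim
    case (elim h)
    have "\<bar>norm (w (t + h) - w t) - norm (h *\<^sub>R v)\<bar> \<le> norm (w (t + h) - w t - h *\<^sub>R v)"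
      by (rule norm_triangle_ineq3)
    then have "\<bar>norm (w (t + h) - w t) - h * norm v\<bar> \<le> \<eta>/2 * h" using elim by simp
    then have "\<bar>norm (w (t + h) - w t) / h - norm v\<bar> \<le> \<eta>/2"
      using elim by (simp add: abs_le_iff field_simps)
    then show ?case using \<open>0 < \<eta>\<close> by (simp add: dist_real_def)
  qed
qed

lemma right_dini_ge_RK:
  fixes K :: "'a::euclidean_space set" and w :: "real \<Rightarrow> 'a"
  assumes "closed K" "K \<noteq> {}" "w t \<notin> K"
    and deriv: "(w has_vector_derivative v) (at t within {t..})"
    and M: "\<And>z. z \<in> ThetaK K (w t) \<Longrightarrow> M \<le> inner v (w t - z)"
  shows "right_dini_ge (\<lambda>s. RK K (w s)) t (M / RK K (w t))"
  unfolding right_dini_ge_def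
proof (intro allI impI)
  fix \<epsilon> :: real assume "0 < \<epsilon>"
  define a where "a = w t"
  define Ra where "Ra = RK K a"
  define h where "h z = inner v (a - z) / norm (a - z)" for z
  have "0 < Ra" using RK_pos[OF assms(1-3)] by (simp add: Ra_def a_def)
  have "continuous_on K h"
    unfolding h_def using assms(3) by (intro continuous_intros) (auto simp: a_def)
  moreover have "M / Ra \<le> h z" if "z \<in> ThetaK K a" for z
    using M[of z] that dist_ThetaK[OF that] \<open>0 < Ra\<close>
    by (simp add: h_def a_def Ra_def dist_norm divide_right_mono)
  ultimately obtain \<rho> where "0 < \<rho>"
    and \<rho>: "\<And>b z. dist b a < \<rho> \<Longrightarrow> z \<in> ThetaK K b \<Longrightarrow> M / Ra - \<epsilon>/2 < h z"
    using ThetaK_upper_semicontinuous[OF assms(1), of h a "M / Ra" "\<epsilon>/2"] \<open>0 < \<epsilon>\<close> by auto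
  have "eventually (\<lambda>s. norm (w s - a - (s - t) *\<^sub>R v) \<le> \<epsilon>/2 * (s - t)) (at_right t)"
    unfolding a_def
    by (rule has_vector_derivative_right_approx[OF deriv]) (use \<open>0 < \<epsilon>\<close> in simp)
  moreover have "eventually (\<lambda>s. dist (w s) a < \<rho>) (at_right t)"
    using has_vector_derivative_continuous[OF deriv] \<open>0 < \<rho>\<close>
    unfolding continuous_within at_within_Ici_at_right a_def by (rule tendstoD)
  ultimately show "eventually (\<lambda>s. RK K (w t) + (s - t) * (M / RK K (w t) - \<epsilon>) \<le> RK K (w s)) (at_right t)"
    using eventually_at_right_less[of t]
  proof eventually_elim
    case (elim s)
    obtain z where z: "z \<in> ThetaK K (w s)" using ThetaK_nonempty[OF assms(1,2)] by blast
    have "a \<noteq> z" using z ThetaK_subset_K assms(3) a_def by blast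
    have "Ra + (s - t) * h z - \<epsilon>/2 * (s - t) \<le> RK K (w s)"
      using RK_ge_first_order[OF z \<open>a \<noteq> z\<close> elim(1)] by (simp add: h_def Ra_def)
    moreover have "(s - t) * (M / Ra - \<epsilon>/2) \<le> (s - t) * h z"
      using \<rho>[OF elim(2) z] elim(3) by (intro mult_left_mono) auto
    moreover have "(s - t) * (M / Ra - \<epsilon>) = (s - t) * (M / Ra - \<epsilon>/2) - \<epsilon>/2 * (s - t)"
      by (simp add: algebra_simps)
    ultimately show ?case by (simp add: Ra_def a_def)
  qed
qed

lemma right_dini_ge_RK_radial:
  fixes K :: "'a::euclidean_space set" and w :: "real \<Rightarrow> 'a" and t :: real
  defines "u \<equiv> w t - mcenter (ThetaK K (w t))"
  assumes "closed K" "K \<noteq> {}" "w t \<notin> K" "0 \<le> k"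
    and "(w has_vector_derivative k *\<^sub>R u) (at t within {t..})"
  shows "right_dini_ge (\<lambda>s. RK K (w s)) t (k * (norm u)\<^sup>2 / RK K (w t))"
proof (rule right_dini_ge_RK[OF assms(2-4,6)])
  fix z assume "z \<in> ThetaK K (w t)"
  then show "k * (norm u)\<^sup>2 \<le> inner (k *\<^sub>R u) (w t - z)"
    using inner_mcenter_ThetaK_ge[of z K "w t"] assms(5) by (simp add: u_def mult_left_mono)
qed

section \<open>The flow of the field x - center (Theta_K x)\<close>

lemma has_real_derivative_norm_sq:
  fixes d :: "real \<Rightarrow> 'a::real_inner"
  assumes "(d has_vector_derivative d') (at s within S)"
  shows "((\<lambda>x. (norm (d x))\<^sup>2) has_real_derivative 2 * inner (d s) d') (at s within S)"
proof -
  have "(d has_derivative (\<lambda>x. x *\<^sub>R d')) (at s within S)"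
    using assms unfolding has_vector_derivative_def .
  from has_derivative_inner[OF this this]
  have "((\<lambda>x. inner (d x) (d x)) has_derivative (\<lambda>h. (2 * inner (d s) d') * h)) (at s within S)"
    by (rule has_derivative_eq_rhs) (auto simp: inner_commute fun_eq_iff algebra_simps)
  then show ?thesis unfolding has_field_derivative_def by (simp add: power2_norm_eq_inner)
qed

lemma has_vector_derivative_shift_right:
  assumes "(w has_vector_derivative v) (at (s + \<delta>) within {s + \<delta>..})"
  shows "((\<lambda>x. w (x + \<delta>)) has_vector_derivative v) (at s within {s..})"
proof -
  have "(\<lambda>x. x + \<delta>) ` {s..} = {s + \<delta>..}"
    by (auto intro: image_eqI[of _ _ "_ - \<delta>"])
  with assms have "(w has_vector_derivative v) (at ((\<lambda>x. x + \<delta>) s) within (\<lambda>x. x + \<delta>) ` {s..})"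
    by simp
  moreover have "((\<lambda>x. x + \<delta>) has_vector_derivative 1) (at s within {s..})"
    by (auto intro!: derivative_eq_intros)
  ultimately show ?thesis using vector_diff_chain_within by (force simp: o_def)
qed

locale center_flow =
  fixes K :: "'a::euclidean_space set" and z :: "real \<Rightarrow> 'a"
  assumes closed_K: "closed K" and K_nonempty: "K \<noteq> {}"
    and outside: "\<And>\<sigma>. 0 \<le> \<sigma> \<Longrightarrow> z \<sigma> \<notin> K"
    and continuous: "continuous_on {0..} z"
    and deriv: "\<And>\<sigma>. 0 \<le> \<sigma> \<Longrightarrow>
      (z has_vector_derivative (z \<sigma> - mcenter (ThetaK K (z \<sigma>)))) (at \<sigma> within {\<sigma>..})"
begin

definition velocity :: "real \<Rightarrow> 'a" where
  "velocity \<sigma> = z \<sigma> - mcenter (ThetaK K (z \<sigma>))"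

lemma inner_velocity_diff_le: "inner (velocity p - velocity q) (z p - z q) \<le> (norm (z p - z q))\<^sup>2"
  using mcenter_ThetaK_monotone[OF closed_K K_nonempty, of "z p" "z q"]
  by (simp add: velocity_def inner_diff_left power2_norm_eq_inner algebra_simps)

lemma separation_growth:
  assumes "0 < \<delta>" "0 \<le> \<sigma>1" "\<sigma>1 \<le> \<sigma>"
  shows "norm (z (\<sigma> + \<delta>) - z \<sigma>) \<le> exp (\<sigma> - \<sigma>1) * norm (z (\<sigma>1 + \<delta>) - z \<sigma>1)"
proof -
  define D where "D s = exp (- 2 * s) * (norm (z (s + \<delta>) - z s))\<^sup>2" for s
  have "continuous_on {\<sigma>1..\<sigma>} z" "continuous_on {\<sigma>1..\<sigma>} (\<lambda>s. z (s + \<delta>))"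
    using assms by (auto intro!: continuous_on_compose2[OF continuous] continuous_intros)
  then have "continuous_on {\<sigma>1..\<sigma>} (\<lambda>s. - D s)" unfolding D_def by (intro continuous_intros)
  moreover have "right_dini_ge (\<lambda>s. - D s) s 0" if "\<sigma>1 \<le> s" for s
  proof -
    define \<Delta> where "\<Delta> = z (s + \<delta>) - z s"
    define \<Delta>' where "\<Delta>' = velocity (s + \<delta>) - velocity s"
    have "((\<lambda>x. z (x + \<delta>) - z x) has_vector_derivative \<Delta>') (at s within {s..})"
      using assms that unfolding \<Delta>'_def
      by (intro has_vector_derivative_diff has_vector_derivative_shift_right)
        (auto simp: velocity_def intro: deriv)
    note d_norm = has_real_derivative_norm_sq[OF this]
    have d_exp: "((\<lambda>x. exp (- 2 * x)) has_real_derivative exp (- 2 * s) * (- 2)) (at s within {s..})"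
      by (auto intro!: derivative_eq_intros)
    have "((\<lambda>s. - D s) has_real_derivative
        - (exp (- 2 * s) * (2 * inner \<Delta> \<Delta>') + exp (- 2 * s) * (- 2) * (norm \<Delta>)\<^sup>2)) (at s within {s..})"
      unfolding D_def \<Delta>_def by (rule DERIV_minus[OF DERIV_mult'[OF d_exp d_norm]])
    moreover have "inner \<Delta> \<Delta>' \<le> (norm \<Delta>)\<^sup>2"
      using inner_velocity_diff_le[of "s + \<delta>" s] by (simp add: \<Delta>_def \<Delta>'_def inner_commute)
    then have "exp (- 2 * s) * inner \<Delta> \<Delta>' \<le> exp (- 2 * s) * (norm \<Delta>)\<^sup>2"
      by (rule mult_left_mono) simp
    then have "0 \<le> - (exp (- 2 * s) * (2 * inner \<Delta> \<Delta>') + exp (- 2 * s) * (- 2) * (norm \<Delta>)\<^sup>2)"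
      by simp
    ultimately show ?thesis by (intro right_dini_ge_mono[OF has_real_derivative_imp_right_dini_ge])
  qed
  ultimately have "D \<sigma> \<le> D \<sigma>1" using right_dini_ge_imp_le[OF assms(3)] by fastforce
  have "exp (2 * \<sigma>) * exp (- 2 * \<sigma>) = 1" by (simp flip: exp_add)
  then have "(norm (z (\<sigma> + \<delta>) - z \<sigma>))\<^sup>2 = exp (2 * \<sigma>) * D \<sigma>"
    by (simp add: D_def mult.assoc[symmetric])
  also have "\<dots> \<le> exp (2 * \<sigma>) * D \<sigma>1" using \<open>D \<sigma> \<le> D \<sigma>1\<close> by simp
  also have "\<dots> = (exp (2 * \<sigma>) * exp (- 2 * \<sigma>1)) * (norm (z (\<sigma>1 + \<delta>) - z \<sigma>1))\<^sup>2"
    by (simp add: D_def)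
  also have "exp (2 * \<sigma>) * exp (- 2 * \<sigma>1) = exp (\<sigma> - \<sigma>1) * exp (\<sigma> - \<sigma>1)"
    by (simp add: algebra_simps flip: exp_add)
  finally have "(norm (z (\<sigma> + \<delta>) - z \<sigma>))\<^sup>2 \<le> (exp (\<sigma> - \<sigma>1) * norm (z (\<sigma>1 + \<delta>) - z \<sigma>1))\<^sup>2"
    by (simp only: power_mult_distrib power2_eq_square mult_ac)
  then show ?thesis by (rule power2_le_imp_le) simp
qed

lemma norm_velocity_growth:
  assumes "0 \<le> \<sigma>1" "\<sigma>1 \<le> \<sigma>"
  shows "norm (velocity \<sigma>) \<le> exp (\<sigma> - \<sigma>1) * norm (velocity \<sigma>1)"
proof (rule tendsto_le[OF trivial_limit_at_right_real])
  show "((\<lambda>h. norm (z (\<sigma> + h) - z \<sigma>) / h) \<longlongrightarrow> norm (velocity \<sigma>)) (at_right 0)"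
    using assms by (intro norm_difference_quotient_tendsto) (simp add: velocity_def deriv)
  have "((\<lambda>h. norm (z (\<sigma>1 + h) - z \<sigma>1) / h) \<longlongrightarrow> norm (velocity \<sigma>1)) (at_right 0)"
    using assms by (intro norm_difference_quotient_tendsto) (simp add: velocity_def deriv)
  then show "((\<lambda>h. exp (\<sigma> - \<sigma>1) * (norm (z (\<sigma>1 + h) - z \<sigma>1) / h))
      \<longlongrightarrow> exp (\<sigma> - \<sigma>1) * norm (velocity \<sigma>1)) (at_right 0)"
    by (rule tendsto_mult_left)
  show "eventually (\<lambda>h. norm (z (\<sigma> + h) - z \<sigma>) / h
      \<le> exp (\<sigma> - \<sigma>1) * (norm (z (\<sigma>1 + h) - z \<sigma>1) / h)) (at_right 0)"
    using eventually_at_right_less[of 0]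
    by eventually_elim (use separation_growth[OF _ assms] in \<open>simp add: divide_right_mono\<close>)
qed

lemma norm_velocity_sq_decay:
  assumes "0 \<le> s" "s \<le> \<sigma>"
  shows "(norm (velocity \<sigma>))\<^sup>2 * exp (- 2 * (\<sigma> - s)) \<le> (norm (velocity s))\<^sup>2"
proof -
  have "(norm (velocity \<sigma>))\<^sup>2 \<le> (exp (\<sigma> - s) * norm (velocity s))\<^sup>2"
    using norm_velocity_growth[OF assms] by (simp add: power_mono)
  also have "\<dots> = exp (2 * (\<sigma> - s)) * (norm (velocity s))\<^sup>2"
    by (simp add: power_mult_distrib power2_eq_square flip: exp_add)
  finally have "(norm (velocity \<sigma>))\<^sup>2 * exp (- 2 * (\<sigma> - s))
      \<le> exp (2 * (\<sigma> - s)) * exp (- 2 * (\<sigma> - s)) * (norm (velocity s))\<^sup>2"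
    by (simp add: mult_right_mono algebra_simps)
  also have "exp (2 * (\<sigma> - s)) * exp (- 2 * (\<sigma> - s)) = 1" by (simp flip: exp_add)
  finally show ?thesis by simp
qed

lemma FK_mono:
  assumes "0 \<le> \<sigma>1" "\<sigma>1 \<le> \<sigma>2"
  shows "FK K (z \<sigma>1) \<le> FK K (z \<sigma>2)"
proof -
  define G where "G = (norm (velocity \<sigma>2))\<^sup>2"
  define g where "g s = (RK K (z s))\<^sup>2 - G * exp (- 2 * (\<sigma>2 - s))" for s
  have "continuous_on {\<sigma>1..\<sigma>2} z" using assms by (auto intro: continuous_on_subset[OF continuous])
  then have "continuous_on {\<sigma>1..\<sigma>2} g"
    unfolding g_def by (intro continuous_intros continuous_on_compose2[OF continuous_on_RK]) auto
  \<comment> \<open>\<open>R\<^sup>2\<close> grows at rate \<open>2 |velocity|\<^sup>2\<close>, which dominates the growth of the subtracted exponential\<close>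
  moreover have "right_dini_ge g s 0" if "\<sigma>1 \<le> s" "s < \<sigma>2" for s
  proof -
    have "0 \<le> s" using assms that by simp
    have "0 < RK K (z s)" using RK_pos[OF closed_K K_nonempty outside[OF \<open>0 \<le> s\<close>]] .
    have "right_dini_ge (\<lambda>x. RK K (z x)) s (1 * (norm (velocity s))\<^sup>2 / RK K (z s))"
      using deriv[OF \<open>0 \<le> s\<close>] unfolding velocity_def
      by (intro right_dini_ge_RK_radial closed_K K_nonempty outside \<open>0 \<le> s\<close>) simp_all
    from right_dini_ge_square[OF this]
    have "right_dini_ge (\<lambda>x. (RK K (z x))\<^sup>2) s (2 * (norm (velocity s))\<^sup>2)"
      using \<open>0 < RK K (z s)\<close> by simp
    moreover have "((\<lambda>x. - (G * exp (- 2 * (\<sigma>2 - x)))) has_real_derivative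
        - (2 * G * exp (- 2 * (\<sigma>2 - s)))) (at s within {s..})"
      by (auto intro!: derivative_eq_intros)
    ultimately have "right_dini_ge (\<lambda>x. (RK K (z x))\<^sup>2 + - (G * exp (- 2 * (\<sigma>2 - x)))) s
        (2 * (norm (velocity s))\<^sup>2 + - (2 * G * exp (- 2 * (\<sigma>2 - s))))"
      by (rule right_dini_ge_add[OF _ has_real_derivative_imp_right_dini_ge])
    then have "right_dini_ge g s (2 * (norm (velocity s))\<^sup>2 - 2 * G * exp (- 2 * (\<sigma>2 - s)))"
      by (simp add: g_def[abs_def])
    then show ?thesis
      using norm_velocity_sq_decay[OF \<open>0 \<le> s\<close>, of \<sigma>2] that
      by (elim right_dini_ge_mono) (auto simp: G_def)
  qed
  ultimately have "g \<sigma>1 \<le> g \<sigma>2" using right_dini_ge_imp_le[OF assms(2)] by blast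
  moreover have "G * exp (- 2 * (\<sigma>2 - \<sigma>1)) \<le> (norm (velocity \<sigma>1))\<^sup>2"
    unfolding G_def by (rule norm_velocity_sq_decay[OF assms])
  moreover have "(FK K (z \<sigma>))\<^sup>2 = (RK K (z \<sigma>))\<^sup>2 - (norm (velocity \<sigma>))\<^sup>2" for \<sigma>
    using FK_sq_add_norm_sq[OF closed_K K_nonempty, of "z \<sigma>"] by (simp add: velocity_def)
  ultimately have "(FK K (z \<sigma>1))\<^sup>2 \<le> (FK K (z \<sigma>2))\<^sup>2" by (simp add: g_def G_def)
  then show ?thesis using FK_nonneg[OF closed_K K_nonempty] by (rule power2_le_imp_le)
qed

end

section \<open>Time change\<close>

lemma has_real_derivative_inverse_right:
  fixes f g :: "real \<Rightarrow> real"
  assumes deriv: "(f has_real_derivative D) (at (g y) within {g y..})" and "D \<noteq> 0"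
    and cont: "(g \<longlongrightarrow> g y) (at_right y)"
    and increasing: "\<And>u. y < u \<Longrightarrow> g y < g u"
    and inverse: "\<And>u. y \<le> u \<Longrightarrow> f (g u) = u"
  shows "(g has_real_derivative inverse D) (at y within {y..})"
proof -
  have "((\<lambda>u. (f u - f (g y)) / (u - g y)) \<longlongrightarrow> D) (at_right (g y))"
    using deriv unfolding has_field_derivative_iff at_within_Ici_at_right .
  moreover have "filterlim g (at_right (g y)) (at_right y)"
    using cont eventually_at_right_less[of y] increasing
    by (intro tendsto_imp_filterlim_at_right) (auto elim: eventually_mono)
  ultimately have "((\<lambda>x. (f (g x) - f (g y)) / (g x - g y)) \<longlongrightarrow> D) (at_right y)"
    by (rule filterlim_compose)
  then have "((\<lambda>x. inverse ((f (g x) - f (g y)) / (g x - g y))) \<longlongrightarrow> inverse D) (at_right y)"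
    using \<open>D \<noteq> 0\<close> by (rule tendsto_inverse)
  moreover have "eventually (\<lambda>x. inverse ((f (g x) - f (g y)) / (g x - g y)) = (g x - g y) / (x - y))
      (at_right y)"
    using eventually_at_right_less[of y] by eventually_elim (simp add: inverse)
  ultimately have "((\<lambda>x. (g x - g y) / (x - y)) \<longlongrightarrow> inverse D) (at_right y)"
    by (rule Lim_transform_eventually)
  then show ?thesis unfolding has_field_derivative_iff at_within_Ici_at_right .
qed

locale time_change =
  fixes g :: "real \<Rightarrow> real" and c :: real
  assumes continuous: "continuous_on {0..} g"
    and pos: "0 < c" and lower_bound: "\<And>t. 0 \<le> t \<Longrightarrow> c \<le> g t"
begin

definition clock :: "real \<Rightarrow> real" where
  "clock t = integral {0..t} g"

definition unclock :: "real \<Rightarrow> real" where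
  "unclock = inv_into {0..} clock"

lemma continuous_on_clock: "continuous_on {0..b} clock"
  unfolding clock_def[abs_def]
  by (intro indefinite_integral_continuous_1 integrable_continuous_interval
      continuous_on_subset[OF continuous]) auto

lemma clock_right_derivative:
  assumes "0 \<le> t"
  shows "(clock has_real_derivative g t) (at t within {t..})"
proof -
  have "(clock has_real_derivative g t) (at t within {0..t + 1})"
    unfolding clock_def[abs_def] using assms
    by (intro integral_has_real_derivative continuous_on_subset[OF continuous]) auto
  then have "(clock has_real_derivative g t) (at t within {t..t + 1})"
    by (rule DERIV_subset) (use assms in auto)
  then show ?thesis by (simp add: at_within_Icc_at_right at_within_Ici_at_right)
qed

lemma clock_increment_ge:
  assumes "0 \<le> t1" "t1 \<le> t2"
  shows "c * (t2 - t1) \<le> clock t2 - clock t1"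
proof -
  have "clock t1 - c * t1 \<le> clock t2 - c * t2"
  proof (rule right_dini_ge_imp_le[OF assms(2), of "\<lambda>t. clock t - c * t"])
    show "continuous_on {t1..t2} (\<lambda>t. clock t - c * t)"
      using assms(1) by (intro continuous_intros continuous_on_subset[OF continuous_on_clock]) auto
    fix t assume "t1 \<le> t" "t < t2"
    then have "0 \<le> t" using assms by simp
    have "((\<lambda>t. clock t - c * t) has_real_derivative g t - c) (at t within {t..})"
      using clock_right_derivative[OF \<open>0 \<le> t\<close>] by (auto intro!: derivative_eq_intros)
    then show "right_dini_ge (\<lambda>t. clock t - c * t) t 0"
      using lower_bound[OF \<open>0 \<le> t\<close>] by (elim right_dini_ge_mono[OF has_real_derivative_imp_right_dini_ge]) simp
  qed
  then show ?thesis by (simp add: algebra_simps)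
qed

lemma clock_0 [simp]: "clock 0 = 0"
  by (simp add: clock_def)

lemma clock_strict_mono:
  assumes "0 \<le> t1" "t1 < t2"
  shows "clock t1 < clock t2"
proof -
  have "0 < c * (t2 - t1)" using pos assms(2) by simp
  then show ?thesis using clock_increment_ge[of t1 t2] assms by linarith
qed

lemma clock_mono:
  assumes "0 \<le> t1" "t1 \<le> t2"
  shows "clock t1 \<le> clock t2"
proof -
  have "0 \<le> c * (t2 - t1)" using pos assms(2) by simp
  then show ?thesis using clock_increment_ge[OF assms] by linarith
qed

lemma clock_nonneg: "0 \<le> t \<Longrightarrow> 0 \<le> clock t"
  using clock_mono[of 0 t] by simp

lemma clock_image: "clock ` {0..} = {0..}"
proof
  show "clock ` {0..} \<subseteq> {0..}" using clock_nonneg by auto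
  show "{0..} \<subseteq> clock ` {0..}"
  proof
    fix \<sigma> :: real assume "\<sigma> \<in> {0..}"
    then have "clock 0 \<le> \<sigma>" "\<sigma> \<le> clock (\<sigma> / c)" "0 \<le> \<sigma> / c"
      using clock_increment_ge[of 0 "\<sigma> / c"] pos by auto
    then obtain t where "0 \<le> t" "clock t = \<sigma>"
      using IVT'[of clock 0 \<sigma> "\<sigma> / c"] continuous_on_clock by auto
    then show "\<sigma> \<in> clock ` {0..}" by (intro image_eqI[of _ _ t]) auto
  qed
qed

lemma inj_on_clock: "inj_on clock {0..}"
proof (rule inj_onI)
  fix t1 t2 assume "t1 \<in> {0..}" "t2 \<in> {0..}" "clock t1 = clock t2"
  then show "t1 = t2" using clock_strict_mono[of t1 t2] clock_strict_mono[of t2 t1]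
    by (cases t1 t2 rule: linorder_cases) auto
qed

lemma unclock_clock: "0 \<le> t \<Longrightarrow> unclock (clock t) = t"
  unfolding unclock_def using inj_on_clock by (simp add: inv_into_f_f)

lemma clock_unclock: "0 \<le> \<sigma> \<Longrightarrow> clock (unclock \<sigma>) = \<sigma>"
  unfolding unclock_def using clock_image by (simp add: f_inv_into_f)

lemma unclock_nonneg: "0 \<le> \<sigma> \<Longrightarrow> 0 \<le> unclock \<sigma>"
  unfolding unclock_def using clock_image inv_into_into[of \<sigma> clock "{0..}"] by auto

lemma unclock_strict_mono:
  assumes "0 \<le> \<sigma>1" "\<sigma>1 < \<sigma>2"
  shows "unclock \<sigma>1 < unclock \<sigma>2"
proof (rule ccontr)
  assume "\<not> unclock \<sigma>1 < unclock \<sigma>2"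
  then have "clock (unclock \<sigma>2) \<le> clock (unclock \<sigma>1)"
    using clock_mono[of "unclock \<sigma>2" "unclock \<sigma>1"] unclock_nonneg[of \<sigma>2] assms by simp
  then show False using clock_unclock[of \<sigma>1] clock_unclock[of \<sigma>2] assms by simp
qed

lemma unclock_mono: "0 \<le> \<sigma>1 \<Longrightarrow> \<sigma>1 \<le> \<sigma>2 \<Longrightarrow> unclock \<sigma>1 \<le> unclock \<sigma>2"
  using unclock_strict_mono[of \<sigma>1 \<sigma>2] by (cases "\<sigma>1 = \<sigma>2") auto

lemma unclock_lipschitz:
  assumes "0 \<le> \<sigma>1" "\<sigma>1 \<le> \<sigma>2"
  shows "c * (unclock \<sigma>2 - unclock \<sigma>1) \<le> \<sigma>2 - \<sigma>1"
  using clock_increment_ge[OF unclock_nonneg[OF assms(1)] unclock_mono[OF assms]]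
    clock_unclock[of \<sigma>1] clock_unclock[of \<sigma>2] assms
  by simp

lemma continuous_on_unclock: "continuous_on {0..} unclock"
proof (rule lipschitz_on_continuous_on)
  have bound: "dist (unclock \<sigma>1) (unclock \<sigma>2) \<le> 1 / c * dist \<sigma>1 \<sigma>2"
    if "0 \<le> \<sigma>1" "\<sigma>1 \<le> \<sigma>2" for \<sigma>1 \<sigma>2
    using unclock_lipschitz[OF that] unclock_mono[OF that] that pos
    by (simp add: dist_real_def field_simps)
  show "(1 / c)-lipschitz_on {0..} unclock"
  proof (intro lipschitz_onI)
    fix \<sigma>1 \<sigma>2 :: real assume "\<sigma>1 \<in> {0..}" "\<sigma>2 \<in> {0..}"
    then show "dist (unclock \<sigma>1) (unclock \<sigma>2) \<le> 1 / c * dist \<sigma>1 \<sigma>2"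
      using bound[of \<sigma>1 \<sigma>2] bound[of \<sigma>2 \<sigma>1] by (cases "\<sigma>1 \<le> \<sigma>2") (auto simp: dist_commute)
  qed (use pos in simp)
qed

lemma unclock_right_derivative:
  assumes "0 \<le> \<sigma>"
  shows "(unclock has_real_derivative inverse (g (unclock \<sigma>))) (at \<sigma> within {\<sigma>..})"
proof (rule has_real_derivative_inverse_right)
  show "(clock has_real_derivative g (unclock \<sigma>)) (at (unclock \<sigma>) within {unclock \<sigma>..})"
    using assms by (intro clock_right_derivative unclock_nonneg)
  show "g (unclock \<sigma>) \<noteq> 0" using lower_bound[OF unclock_nonneg[OF assms]] pos by simp
  have "(unclock \<longlongrightarrow> unclock \<sigma>) (at \<sigma> within {0..})"
    using continuous_on_unclock assms by (simp add: continuous_on_def)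
  moreover have "at_right \<sigma> \<le> at \<sigma> within {0..}"
    unfolding at_within_Ici_at_right[symmetric] using assms by (intro at_le) auto
  ultimately show "(unclock \<longlongrightarrow> unclock \<sigma>) (at_right \<sigma>)" by (rule tendsto_mono[rotated])
  show "unclock \<sigma> < unclock u" if "\<sigma> < u" for u
    using unclock_strict_mono[OF assms that] .
  show "clock (unclock u) = u" if "\<sigma> \<le> u" for u
    using clock_unclock assms that by simp
qed

lemma has_vector_derivative_unclock_comp:
  assumes "0 \<le> \<sigma>" "(y has_vector_derivative v) (at (unclock \<sigma>) within {unclock \<sigma>..})"
  shows "((\<lambda>\<sigma>. y (unclock \<sigma>)) has_vector_derivative inverse (g (unclock \<sigma>)) *\<^sub>R v) (at \<sigma> within {\<sigma>..})"
proof -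
  have "unclock ` {\<sigma>..} \<subseteq> {unclock \<sigma>..}"
    using assms(1) unclock_mono by auto
  with assms(2) have "(y has_vector_derivative v) (at (unclock \<sigma>) within unclock ` {\<sigma>..})"
    by (rule has_vector_derivative_within_subset)
  with unclock_right_derivative[OF assms(1)] show ?thesis
    unfolding has_real_derivative_iff_has_vector_derivative
    by (auto dest: vector_diff_chain_within simp: o_def)
qed

end

section \<open>The critical function and offsets\<close>

lemma chiK_le: "RK K p = t \<Longrightarrow> chiK K t \<le> norm (gradK K p)"
  unfolding chiK_def by (auto intro!: cInf_lower bdd_belowI2[of _ 0])

lemma r_mu_le_RK:
  assumes "\<alpha>' < RK K p" "RK K p \<le> Rmax K" "norm (gradK K p) < \<mu>"
  shows "r_mu K \<mu> \<alpha>' \<le> ereal (RK K p)"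
  unfolding r_mu_def using assms chiK_le[of K p "RK K p"] by (intro Inf_lower imageI) auto

lemma offset_FK_ge:
  assumes "closed K" "K \<noteq> {}" "0 \<le> \<alpha>" "\<alpha> < RK K p"
  shows "FK K p * ((RK K p - \<alpha>) / RK K p) \<le> FK (offset K \<alpha>) p"
proof -
  define R where "R = RK K p"
  define s where "s = (R - \<alpha>) / R"
  define h where "h z = p + s *\<^sub>R (z - p)" for z
  have "0 < s" "0 < R" using assms(3,4) by (simp_all add: s_def R_def)
  \<comment> \<open>the homothety h pushes every nearest point of K a distance \<alpha> towards p\<close>
  have h: "h z \<in> offset K \<alpha>" "dist p (h z) = R - \<alpha>" if "z \<in> ThetaK K p" for z
  proof -
    have "norm (p - z) = R" using dist_ThetaK[OF that] by (simp add: R_def dist_norm)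
    moreover have "h z - z = (1 - s) *\<^sub>R (p - z)" "p - h z = s *\<^sub>R (p - z)"
      by (simp_all add: h_def algebra_simps)
    moreover have "s \<le> 1" using assms(3) \<open>0 < R\<close> by (simp add: s_def)
    ultimately have "dist (h z) z = (1 - s) * R" "dist p (h z) = s * R"
      using \<open>0 < s\<close> by (simp_all add: dist_norm)
    moreover have "(1 - s) * R = \<alpha>" "s * R = R - \<alpha>" using \<open>0 < R\<close> by (simp_all add: s_def field_simps)
    ultimately have "dist (h z) z = \<alpha>" "dist p (h z) = R - \<alpha>" by simp_all
    moreover have "z \<in> K" using that ThetaK_subset_K by blast
    ultimately show "h z \<in> offset K \<alpha>" "dist p (h z) = R - \<alpha>"
      unfolding offset_def by (auto intro: infdist_le2)
  qed
  obtain z0 where z0: "z0 \<in> ThetaK K p" using ThetaK_nonempty[OF assms(1,2)] by blast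
  have "RK (offset K \<alpha>) p = R - \<alpha>"
  proof (rule antisym)
    show "RK (offset K \<alpha>) p \<le> R - \<alpha>" using h[OF z0] RK_le_dist by metis
    have "R - \<alpha> \<le> dist p v" if "v \<in> offset K \<alpha>" for v
      using that RK_triangle[of K p v] by (simp add: offset_def R_def RK_def)
    then show "R - \<alpha> \<le> RK (offset K \<alpha>) p"
      unfolding RK_def using h(1)[OF z0] by (subst infdist_notempty) (auto intro!: cINF_greatest)
  qed
  then have "h ` ThetaK K p \<subseteq> ThetaK (offset K \<alpha>) p" using h by (auto simp: ThetaK_def)
  then have "mradius (h ` ThetaK K p) \<le> FK (offset K \<alpha>) p"
    unfolding FK_def using z0 bounded_subset[OF bounded_sphere ThetaK_subset_sphere]
    by (intro mradius_mono) auto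
  moreover have "mradius (h ` ThetaK K p) = s * FK K p"
    unfolding h_def[abs_def] FK_def using \<open>0 < s\<close> z0 compact_ThetaK[OF assms(1)]
    by (intro mradius_homothety compact_imp_bounded) auto
  ultimately show ?thesis by (simp add: s_def R_def mult.commute)
qed

lemma lam_le_FK_offset:
  assumes "closed K" "K \<noteq> {}" "p \<notin> K" "0 \<le> \<alpha>" "0 < lam" "\<alpha> + lam < r" "r \<le> RK K p"
    and "norm (gradK K p) < sqrt (1 - (lam / (r - \<alpha>))\<^sup>2)"
    and "RK K p \<le> RK K q" "FK K p \<le> FK K q"
  shows "lam \<le> FK (offset K \<alpha>) q"
proof -
  define Rp Rq where "Rp = RK K p" and "Rq = RK K q"
  have "\<alpha> < Rp" "0 < r - \<alpha>" using assms(5-7) by (simp_all add: Rp_def)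
  then have "0 < Rp" "\<alpha> < Rq" using assms(4,9) by (simp_all add: Rq_def Rp_def)
  have "Rp * (lam / (r - \<alpha>)) < FK K p"
    unfolding Rp_def using assms(1-3,5,8) \<open>0 < r - \<alpha>\<close> by (intro RK_mult_lt_FK) auto
  have "lam * ((Rp - \<alpha>) / (r - \<alpha>)) = Rp * (lam / (r - \<alpha>)) * ((Rp - \<alpha>) / Rp)"
    using \<open>0 < Rp\<close> \<open>0 < r - \<alpha>\<close> by (simp add: field_simps)
  also have "\<dots> \<le> FK K p * ((Rp - \<alpha>) / Rp)"
    using \<open>Rp * (lam / (r - \<alpha>)) < FK K p\<close> \<open>0 < Rp\<close> \<open>\<alpha> < Rp\<close> by (intro mult_right_mono) auto
  also have "\<dots> \<le> FK K q * ((Rq - \<alpha>) / Rq)"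
  proof (rule mult_mono)
    show "(Rp - \<alpha>) / Rp \<le> (Rq - \<alpha>) / Rq"
      using \<open>0 < Rp\<close> assms(4,9) divide_left_mono[of Rp Rq \<alpha>]
      by (simp add: Rp_def Rq_def diff_divide_distrib)
    show "FK K p \<le> FK K q" by (rule assms(10))
    show "0 \<le> FK K q" by (rule FK_nonneg[OF assms(1,2)])
    show "0 \<le> (Rp - \<alpha>) / Rp" using \<open>\<alpha> < Rp\<close> \<open>0 < Rp\<close> by simp
  qed
  also have "\<dots> \<le> FK (offset K \<alpha>) q"
    unfolding Rq_def by (rule offset_FK_ge[OF assms(1,2,4) \<open>\<alpha> < Rq\<close>[unfolded Rq_def]])
  finally show ?thesis
    using assms(5,7) \<open>0 < r - \<alpha>\<close> mult_left_mono[of 1 "(Rp - \<alpha>) / (r - \<alpha>)" lam]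
    by (simp add: Rp_def)
qed

section \<open>Gradient curves\<close>

locale gradient_curve =
  fixes K :: "'a::euclidean_space set" and y :: "real \<Rightarrow> 'a"
  assumes closed_K: "closed K" and bounded_complement: "bounded (- K)"
    and outside: "\<And>t. 0 \<le> t \<Longrightarrow> y t \<notin> K"
    and continuous: "continuous_on {0..} y"
    and deriv: "\<And>t. 0 \<le> t \<Longrightarrow> (y has_vector_derivative gradK K (y t)) (at t within {t..})"
begin

lemma K_nonempty: "K \<noteq> {}"
  using bounded_complement by (rule nonempty_if_bounded_complement)

lemma RK_curve_pos: "0 \<le> t \<Longrightarrow> 0 < RK K (y t)"
  using closed_K K_nonempty outside by (rule RK_pos)

lemma RK_curve_le_Rmax: "0 \<le> t \<Longrightarrow> RK K (y t) \<le> Rmax K"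
  using bounded_complement K_nonempty outside by (rule RK_le_Rmax)

lemma continuous_on_RK_curve: "0 \<le> a \<Longrightarrow> continuous_on {a..b} (\<lambda>s. RK K (y s))"
  by (rule continuous_on_compose2[OF continuous_on_RK continuous_on_subset[OF continuous]]) auto

lemma right_dini_ge_RK_curve:
  assumes "0 \<le> t"
  shows "right_dini_ge (\<lambda>s. RK K (y s)) t ((norm (gradK K (y t)))\<^sup>2)"
proof -
  have "gradK K (y t) = (1 / RK K (y t)) *\<^sub>R (y t - mcenter (ThetaK K (y t)))"
    by (simp add: gradK_def)
  then have "right_dini_ge (\<lambda>s. RK K (y s)) t
      (1 / RK K (y t) * (norm (y t - mcenter (ThetaK K (y t))))\<^sup>2 / RK K (y t))"
    using deriv[OF assms] RK_curve_pos[OF assms]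
    by (intro right_dini_ge_RK_radial closed_K K_nonempty outside assms) simp_all
  then show ?thesis by (simp add: norm_gradK power2_eq_square)
qed

lemma RK_curve_mono:
  assumes "0 \<le> t1" "t1 \<le> t2"
  shows "RK K (y t1) \<le> RK K (y t2)"
proof (rule right_dini_ge_imp_le[OF assms(2) continuous_on_RK_curve[OF assms(1)]])
  fix t assume "t1 \<le> t"
  then show "right_dini_ge (\<lambda>s. RK K (y s)) t 0"
    using assms(1) by (intro right_dini_ge_mono[OF right_dini_ge_RK_curve]) auto
qed

lemma RK_curve_growth:
  assumes "0 \<le> T" "0 \<le> m" "\<And>t. 0 \<le> t \<Longrightarrow> t < T \<Longrightarrow> m \<le> norm (gradK K (y t))"
  shows "RK K (y 0) + m\<^sup>2 * T \<le> RK K (y T)"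
proof -
  have "RK K (y 0) - m\<^sup>2 * 0 \<le> RK K (y T) - m\<^sup>2 * T"
  proof (rule right_dini_ge_imp_le[OF assms(1)])
    show "continuous_on {0..T} (\<lambda>s. RK K (y s) - m\<^sup>2 * s)"
      by (intro continuous_intros continuous_on_RK_curve) simp
    fix t assume t: "0 \<le> t" "t < T"
    have "right_dini_ge (\<lambda>s. RK K (y s) + - (m\<^sup>2 * s)) t ((norm (gradK K (y t)))\<^sup>2 + - (m\<^sup>2))"
      using right_dini_ge_RK_curve[OF t(1)]
      by (rule right_dini_ge_add[OF _ has_real_derivative_imp_right_dini_ge])
        (auto intro!: derivative_eq_intros)
    moreover have "m\<^sup>2 \<le> (norm (gradK K (y t)))\<^sup>2" using assms(2,3) t by (simp add: power_mono)
    ultimately show "right_dini_ge (\<lambda>s. RK K (y s) - m\<^sup>2 * s) t 0"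
      by (simp add: right_dini_ge_mono)
  qed
  then show ?thesis by simp
qed

lemma exists_slow_time:
  assumes "0 < m"
  shows "\<exists>t. 0 \<le> t \<and> t < Rmax K / m\<^sup>2 \<and> norm (gradK K (y t)) < m"
proof (rule ccontr)
  assume slow_never: "\<not> ?thesis"
  have "0 \<le> Rmax K / m\<^sup>2" using RK_curve_pos[of 0] RK_curve_le_Rmax[of 0] by simp
  moreover have "m \<le> norm (gradK K (y t))" if "0 \<le> t" "t < Rmax K / m\<^sup>2" for t
    using slow_never that by (auto simp: not_less)
  ultimately have "RK K (y 0) + m\<^sup>2 * (Rmax K / m\<^sup>2) \<le> RK K (y (Rmax K / m\<^sup>2))"
    using assms by (intro RK_curve_growth) auto
  then show False using RK_curve_pos[of 0] RK_curve_le_Rmax[of "Rmax K / m\<^sup>2"] assms \<open>0 \<le> Rmax K / m\<^sup>2\<close>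
    by simp
qed

end

lemma (in gradient_curve) time_change_speed: "time_change (\<lambda>t. 1 / RK K (y t)) (1 / Rmax K)"
  unfolding time_change_def
proof (intro conjI allI impI)
  show "continuous_on {0..} (\<lambda>t. 1 / RK K (y t))"
    using RK_curve_pos continuous_on_compose2[OF continuous_on_RK continuous]
    by (intro continuous_intros) (auto simp: less_imp_neq[symmetric])
  show "0 < 1 / Rmax K" using RK_curve_pos[of 0] RK_curve_le_Rmax[of 0] by simp
  show "1 / Rmax K \<le> 1 / RK K (y t)" if "0 \<le> t" for t
    using RK_curve_pos[OF that] RK_curve_le_Rmax[OF that] by (simp add: frac_le)
qed

lemma (in gradient_curve) center_flow_reparametrized:
  "center_flow K (\<lambda>\<sigma>. y (time_change.unclock (\<lambda>t. 1 / RK K (y t)) \<sigma>))"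
  unfolding center_flow_def
proof (intro conjI allI impI)
  note tc = time_change_speed
  show "closed K" by (fact closed_K)
  show "K \<noteq> {}" by (fact K_nonempty)
  fix \<sigma> :: real assume "0 \<le> \<sigma>"
  then have "0 \<le> time_change.unclock (\<lambda>t. 1 / RK K (y t)) \<sigma>"
    by (rule time_change.unclock_nonneg[OF tc])
  then show "y (time_change.unclock (\<lambda>t. 1 / RK K (y t)) \<sigma>) \<notin> K" by (rule outside)
  have "inverse (1 / RK K (y (time_change.unclock (\<lambda>t. 1 / RK K (y t)) \<sigma>))) *\<^sub>R
      gradK K (y (time_change.unclock (\<lambda>t. 1 / RK K (y t)) \<sigma>))
    = y (time_change.unclock (\<lambda>t. 1 / RK K (y t)) \<sigma>)
      - mcenter (ThetaK K (y (time_change.unclock (\<lambda>t. 1 / RK K (y t)) \<sigma>)))"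
    using RK_curve_pos[OF \<open>0 \<le> time_change.unclock _ \<sigma>\<close>] by (simp add: gradK_def)
  then show "((\<lambda>\<sigma>. y (time_change.unclock (\<lambda>t. 1 / RK K (y t)) \<sigma>)) has_vector_derivative
      y (time_change.unclock (\<lambda>t. 1 / RK K (y t)) \<sigma>)
      - mcenter (ThetaK K (y (time_change.unclock (\<lambda>t. 1 / RK K (y t)) \<sigma>)))) (at \<sigma> within {\<sigma>..})"
    using time_change.has_vector_derivative_unclock_comp[OF tc \<open>0 \<le> \<sigma>\<close>
        deriv[OF \<open>0 \<le> time_change.unclock _ \<sigma>\<close>]]
    by simp
next
  show "continuous_on {0..} (\<lambda>\<sigma>. y (time_change.unclock (\<lambda>t. 1 / RK K (y t)) \<sigma>))"
    by (rule continuous_on_compose2[OF continuous time_change.continuous_on_unclock[OF time_change_speed]])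
      (auto intro: time_change.unclock_nonneg[OF time_change_speed])
qed

lemma (in gradient_curve) FK_curve_mono:
  assumes "0 \<le> t1" "t1 \<le> t2"
  shows "FK K (y t1) \<le> FK K (y t2)"
proof -
  note tc = time_change_speed
  have "FK K (y (time_change.unclock (\<lambda>t. 1 / RK K (y t)) (time_change.clock (\<lambda>t. 1 / RK K (y t)) t1)))
      \<le> FK K (y (time_change.unclock (\<lambda>t. 1 / RK K (y t)) (time_change.clock (\<lambda>t. 1 / RK K (y t)) t2)))"
    by (rule center_flow.FK_mono[OF center_flow_reparametrized time_change.clock_nonneg[OF tc assms(1)]
          time_change.clock_mono[OF tc assms]])
  then show ?thesis using assms time_change.unclock_clock[OF tc] by simp
qed

lemma is_flowK_gradient_curve:
  assumes "closed K" "bounded (- K)" "is_flowK K \<Phi>" "x \<notin> K"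
  shows "gradient_curve K (\<lambda>t. \<Phi> t x)"
  unfolding gradient_curve_def
proof (intro conjI allI impI)
  have flow: "continuous_on ({0..} \<times> - K) (\<lambda>(t, x). \<Phi> t x)"
    "\<And>t x. 0 \<le> t \<Longrightarrow> x \<in> - K \<Longrightarrow> \<Phi> t x \<in> - K"
    "\<And>t x. 0 \<le> t \<Longrightarrow> x \<in> - K \<Longrightarrow>
      ((\<lambda>s. \<Phi> s x) has_vector_derivative gradK K (\<Phi> t x)) (at t within {t..})"
    using assms(3) unfolding is_flowK_def by auto
  show "closed K" by (fact assms(1))
  show "bounded (- K)" by (fact assms(2))
  show "\<Phi> t x \<notin> K" if "0 \<le> t" for t using flow(2) that assms(4) by blast
  have "continuous_on {0..} (\<lambda>t. (t, x))" "(\<lambda>t. (t, x)) ` {0..} \<subseteq> {0..} \<times> - K"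
    using assms(4) by (auto intro: continuous_intros)
  from continuous_on_compose2[OF flow(1) this]
  show "continuous_on {0..} (\<lambda>t. \<Phi> t x)" by simp
  show "((\<lambda>s. \<Phi> s x) has_vector_derivative gradK K (\<Phi> t x)) (at t within {t..})" if "0 \<le> t" for t
    using flow(3) that assms(4) by blast
qed

theorem lemma9p6:
  fixes K :: "'a::euclidean_space set" and \<Phi> :: "real \<Rightarrow> 'a \<Rightarrow> 'a"
    and \<alpha> \<alpha>' lam \<mu> :: real
  assumes "closed K" and "bounded (- K)"
    and "is_flowK K \<Phi>"
    and "\<alpha> \<ge> 0" and "lam > 0" and "0 < \<mu>" and "\<mu> \<le> 1"
    and "0 < \<alpha>'" and "\<alpha>' \<le> \<alpha>"
    and "r_mu K \<mu> \<alpha>' > ereal (\<alpha> + lam)"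
    and "mu_tilde K \<mu> lam \<alpha> \<alpha>' > 0"
  shows "\<Phi> (Rmax K / (mu_tilde K \<mu> lam \<alpha> \<alpha>')\<^sup>2) ` (- offset K \<alpha>') \<subseteq> axis K lam \<alpha>"
proof -
  define \<mu>' where "\<mu>' = mu_tilde K \<mu> lam \<alpha> \<alpha>'"
  define T where "T = Rmax K / \<mu>'\<^sup>2"
  have "\<Phi> T x \<in> axis K lam \<alpha>" if "x \<notin> offset K \<alpha>'" for x
  proof -
    have x: "\<alpha>' < infdist x K" using that by (simp add: offset_def)
    then have "x \<notin> K" using assms(8) by auto
    have gc: "gradient_curve K (\<lambda>t. \<Phi> t x)"
      using is_flowK_gradient_curve[OF assms(1-3) \<open>x \<notin> K\<close>] .
    have "\<Phi> 0 x = x" using assms(3) \<open>x \<notin> K\<close> by (simp add: is_flowK_def)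
    obtain t where t: "0 \<le> t" "t < T" "norm (gradK K (\<Phi> t x)) < \<mu>'"
      using gradient_curve.exists_slow_time[OF gc, of \<mu>'] assms(11) by (auto simp: T_def \<mu>'_def)
    have "\<alpha>' < RK K (\<Phi> t x)"
      using x gradient_curve.RK_curve_mono[OF gc order_refl t(1)] \<open>\<Phi> 0 x = x\<close> by (simp add: RK_def)
    moreover have "norm (gradK K (\<Phi> t x)) < \<mu>" using t(3) by (auto simp: \<mu>'_def mu_tilde_def split: if_splits)
    ultimately have "r_mu K \<mu> \<alpha>' \<le> ereal (RK K (\<Phi> t x))"
      using gradient_curve.RK_curve_le_Rmax[OF gc t(1)] by (intro r_mu_le_RK)
    then obtain r where r: "r_mu K \<mu> \<alpha>' = ereal r" "\<alpha> + lam < r" "r \<le> RK K (\<Phi> t x)"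
      using assms(10) by (cases "r_mu K \<mu> \<alpha>'") auto
    have "lam \<le> FK (offset K \<alpha>) (\<Phi> T x)"
    proof (rule lam_le_FK_offset[OF assms(1) _ _ assms(4,5) r(2,3)])
      show "K \<noteq> {}" using assms(2) by (rule nonempty_if_bounded_complement)
      show "\<Phi> t x \<notin> K" by (rule gradient_curve.outside[OF gc t(1)])
      show "norm (gradK K (\<Phi> t x)) < sqrt (1 - (lam / (r - \<alpha>))\<^sup>2)"
        using t(3) r(1) by (simp add: \<mu>'_def mu_tilde_def)
      show "RK K (\<Phi> t x) \<le> RK K (\<Phi> T x)" "FK K (\<Phi> t x) \<le> FK K (\<Phi> T x)"
        using t by (auto intro!: gradient_curve.RK_curve_mono[OF gc] gradient_curve.FK_curve_mono[OF gc])
    qed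
    then show ?thesis by (simp add: axis_def)
  qed
  then show ?thesis by (auto simp: T_def \<mu>'_def)
qed

end
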